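(* Let $\mathbf r(x,y)$ be the middle surface of a membrane O surface with constant purely normal load $q_n\neq 0$ (setting and notation as in the context), and suppose it is of the 1st kind, i.e. the curvature line coordinates $(x,y)$ are such that $$2\overline{A}_1 H_\circ - q_n A_1^2 = -q_n,\qquad 2\overline{A}_2 K_\circ - q_n A_2^2 = q_n$$ (the normalization $f(x)=-g(y)=q_n$). Then the first and third fundamental forms are represented as $$\mathrm{I} = (\cosh\alpha + h\sinh\alpha)^2\,dx^2 + (\sinh\alpha + h\cosh\alpha)^2\,dy^2,\qquad \mathrm{III} = e^{2\xi}(\sinh^2\alpha\,dx^2 + \cosh^2\alpha\,dy^2),$$ where the functions $h,\alpha,\xi$ of $(x,y)$ satisfy the system $$h_x = (h+\coth\alpha)\,\xi_x,\qquad h_y = (h+\tanh\alpha)\,\xi_y,$$ $$\xi_{xy} = \xi_x\xi_y + (\log\sinh\alpha)_y\,\xi_x + (\log\cosh\alpha)_x\,\xi_y,$$ $$(\alpha_x + \xi_x\coth\alpha)_x + (\alpha_y + \xi_y\tanh\alpha)_y + e^{2\xi}\sinh\alpha\cosh\alpha = 0.$$ Furthermore, the stress resultants are given by $$T_1 = \frac{q_n e^{-\xi}}{2}\,\frac{2h\sinh\alpha + (1+h^2)\cosh\alpha}{\sinh\alpha + h\cosh\alpha},\qquad T_2 = \frac{q_n e^{-\xi}}{2}\,\frac{2h\cosh\alpha + (1+h^2)\sinh\alpha}{\cosh\alpha + h\sinh\alpha}.$$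
   Context: Let $\mathbf r(x,y)$ be a smooth surface in $\mathbb R^3$ parametrized by curvature line coordinates $(x,y)$, normalized so that $\mathbf r_x = A_1\mathbf X$, $\mathbf r_y = A_2\mathbf Y$ with $\mathbf X,\mathbf Y$ orthonormal. Let $\mathbf N = \mathbf X\times\mathbf Y$, let $\kappa_1,\kappa_2$ be the principal curvatures along the $x$- and $y$-lines, and set $H_\circ = -\kappa_1 A_1$, $K_\circ = -\kappa_2 A_2$, so that $\mathbf N_x = H_\circ\mathbf X$, $\mathbf N_y = K_\circ\mathbf Y$; the first fundamental form is $\mathrm I = A_1^2dx^2 + A_2^2dy^2$ and the third is $\mathrm{III} = H_\circ^2dx^2 + K_\circ^2dy^2$. Put $p=(A_1)_y/A_2$, $q = (A_2)_x/A_1$; the Gauss–Mainardi–Codazzi equations are $(H_\circ)_y = pK_\circ$, $(K_\circ)_x = qH_\circ$, $p_y+q_x+H_\circ K_\circ = 0$. The surface is the middle surface of a shell membrane on which a constant purely normal load $q_n\neq0$ (per unit area) acts, with principal stress lines coinciding with principal curvature lines; the in-plane normal stress resultants $T_1,T_2$ satisfy the equilibrium equations $(T_1)_x + (\log A_1)_x(T_1-T_2)=0$, $(T_2)_y + (\log A_2)_y(T_2-T_1)=0$, $\kappa_1T_1+\kappa_2T_2+q_n=0$. Such a configuration is called a membrane O surface. Set $\overline A_1 = T_2A_1$, $\overline A_2 = T_1A_2$. Then $f := q_nA_1^2 - 2\overline A_1H_\circ$ depends only on $x$ and $g := q_nA_2^2 - 2\overline A_2K_\circ$ depends only on $y$.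 The membrane O surface is said to be of the 1st kind if the curvature line coordinates can be chosen so that $f=-g=q_n$, and of the 2nd kind if they can be chosen so that $f=g=q_n$. *)

theory Defs
  imports "HOL-Analysis.Analysis"
begin

definition pdx :: "(real \<times> real \<Rightarrow> 'a::real_normed_vector) \<Rightarrow> real \<times> real \<Rightarrow> 'a" where
  "pdx f p = vector_derivative (\<lambda>t. f (t, snd p)) (at (fst p))"

definition pdy :: "(real \<times> real \<Rightarrow> 'a::real_normed_vector) \<Rightarrow> real \<times> real \<Rightarrow> 'a" where
  "pdy f p = vector_derivative (\<lambda>t. f (fst p, t)) (at (snd p))"

text \<open>Smoothness (C-infinity) on a set: differentiable, with all partial derivatives
  again smooth (coinductively, i.e. partial derivatives of all orders exist).\<close>
coinductive smooth_on :: "(real \<times> real) set \<Rightarrow> (real \<times> real \<Rightarrow> 'a::real_normed_vector) \<Rightarrow> bool"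
  where "\<lbrakk> f differentiable_on U; smooth_on U (pdx f); smooth_on U (pdy f) \<rbrakk> \<Longrightarrow> smooth_on U f"

end

theory Submission
  imports Defs
begin

text \<open>Eliminating the stresses from the normal equilibrium equation by means of the two first-kind
  normalizations gives the pointwise identity \<open>(H A2 - K A1)\<^sup>2 = K\<^sup>2 - H\<^sup>2\<close>. Hence
  \<open>e\<^sup>2\<^sup>\<xi> := K\<^sup>2 - H\<^sup>2\<close> is positive, \<open>H = \<plusminus>e\<^sup>\<xi> sinh \<alpha>\<close> and \<open>K = \<plusminus>e\<^sup>\<xi> cosh \<alpha>\<close> define \<open>\<alpha>\<close>,
  and the same identity makes \<open>A1\<close>, \<open>A2\<close> equal to \<open>\<plusminus>(cosh \<alpha> + h sinh \<alpha>)\<close>,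
  \<open>\<plusminus>(sinh \<alpha> + h cosh \<alpha>)\<close> for a single function \<open>h\<close>; all three are explicit expressions in
  smooth data, hence smooth. In these terms the two Codazzi equations become the equations for
  \<open>h\<^sub>x\<close> and \<open>h\<^sub>y\<close>, their compatibility \<open>h\<^sub>x\<^sub>y = h\<^sub>y\<^sub>x\<close> is the equation for \<open>\<xi>\<^sub>x\<^sub>y\<close>, the Gauss
  equation is the last equation, and solving the two normalizations for the stresses gives
  \<open>T1\<close> and \<open>T2\<close>. The Gauss and Codazzi equations themselves are derived from the frame
  \<open>X, Y, X \<times> Y\<close> using the symmetry of second partial derivatives of smooth maps.\<close>

lemma has_vector_derivative_pdx:
  fixes f :: "real \<times> real \<Rightarrow> 'a::real_normed_vector"
  assumes "f differentiable (at p)"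
  shows "((\<lambda>t. f (t, snd p)) has_vector_derivative pdx f p) (at (fst p))"
proof -
  have "(\<lambda>t::real. (t, snd p)) differentiable (at (fst p))"
    by (rule differentiableI[of _ "\<lambda>t. (t, 0)"]) (auto intro!: derivative_eq_intros)
  then have "(\<lambda>t. f (t, snd p)) differentiable (at (fst p))"
    using differentiable_chain_at assms by (fastforce simp: o_def)
  then show ?thesis unfolding pdx_def by (simp add: vector_derivative_works[symmetric])
qed

lemma has_vector_derivative_pdy:
  fixes f :: "real \<times> real \<Rightarrow> 'a::real_normed_vector"
  assumes "f differentiable (at p)"
  shows "((\<lambda>t. f (fst p, t)) has_vector_derivative pdy f p) (at (snd p))"
proof -
  have "(\<lambda>t::real. (fst p, t)) differentiable (at (snd p))"
    by (rule differentiableI[of _ "\<lambda>t. (0, t)"]) (auto intro!: derivative_eq_intros)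
  then have "(\<lambda>t. f (fst p, t)) differentiable (at (snd p))"
    using differentiable_chain_at assms by (fastforce simp: o_def)
  then show ?thesis unfolding pdy_def by (simp add: vector_derivative_works[symmetric])
qed

lemma has_field_derivative_pdx:
  fixes f :: "real \<times> real \<Rightarrow> real"
  shows "f differentiable (at p) \<Longrightarrow> ((\<lambda>t. f (t, snd p)) has_field_derivative pdx f p) (at (fst p))"
  using has_vector_derivative_pdx by (simp add: has_real_derivative_iff_has_vector_derivative)

lemma has_field_derivative_pdy:
  fixes f :: "real \<times> real \<Rightarrow> real"
  shows "f differentiable (at p) \<Longrightarrow> ((\<lambda>t. f (fst p, t)) has_field_derivative pdy f p) (at (snd p))"
  using has_vector_derivative_pdy by (simp add: has_real_derivative_iff_has_vector_derivative)

lemma has_field_derivative_pdx_Pair: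
  fixes f :: "real \<times> real \<Rightarrow> real"
  shows "f differentiable (at (x, y)) \<Longrightarrow> ((\<lambda>t. f (t, y)) has_field_derivative pdx f (x, y)) (at x)"
  using has_field_derivative_pdx[of f "(x, y)"] by simp

lemma has_field_derivative_pdy_Pair:
  fixes f :: "real \<times> real \<Rightarrow> real"
  shows "f differentiable (at (x, y)) \<Longrightarrow> ((\<lambda>t. f (x, t)) has_field_derivative pdy f (x, y)) (at y)"
  using has_field_derivative_pdy[of f "(x, y)"] by simp

lemma pdx_eqI:
  fixes f g :: "real \<times> real \<Rightarrow> 'a::real_normed_vector"
  assumes "open U" "p \<in> U" "\<And>q. q \<in> U \<Longrightarrow> f q = g q"
    and "((\<lambda>t. g (t, snd p)) has_vector_derivative D) (at (fst p))"
  shows "pdx f p = D"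
proof -
  have "open ((\<lambda>t. (t, snd p)) -` U)"
    by (rule open_vimage[OF assms(1)]) (auto intro!: continuous_intros)
  then have "((\<lambda>t. f (t, snd p)) has_vector_derivative D) (at (fst p))"
    by (rule has_vector_derivative_transform_within_open[OF assms(4)]) (simp_all add: assms(2,3))
  then show ?thesis unfolding pdx_def by (rule vector_derivative_at)
qed

lemma pdy_eqI:
  fixes f g :: "real \<times> real \<Rightarrow> 'a::real_normed_vector"
  assumes "open U" "p \<in> U" "\<And>q. q \<in> U \<Longrightarrow> f q = g q"
    and "((\<lambda>t. g (fst p, t)) has_vector_derivative D) (at (snd p))"
  shows "pdy f p = D"
proof -
  have "open ((\<lambda>t. (fst p, t)) -` U)"
    by (rule open_vimage[OF assms(1)]) (auto intro!: continuous_intros)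
  then have "((\<lambda>t. f (fst p, t)) has_vector_derivative D) (at (snd p))"
    by (rule has_vector_derivative_transform_within_open[OF assms(4)]) (simp_all add: assms(2,3))
  then show ?thesis unfolding pdy_def by (rule vector_derivative_at)
qed

lemmas pdx_real_eqI = pdx_eqI[where 'a=real, folded has_real_derivative_iff_has_vector_derivative]
lemmas pdy_real_eqI = pdy_eqI[where 'a=real, folded has_real_derivative_iff_has_vector_derivative]

lemma pdx_cong:
  "\<lbrakk>open U; p \<in> U; \<And>q. q \<in> U \<Longrightarrow> f q = g q; g differentiable (at p)\<rbrakk> \<Longrightarrow> pdx f p = pdx g p"
  by (rule pdx_eqI[of U p f g, OF _ _ _ has_vector_derivative_pdx]) auto

lemma pdy_cong:
  "\<lbrakk>open U; p \<in> U; \<And>q. q \<in> U \<Longrightarrow> f q = g q; g differentiable (at p)\<rbrakk> \<Longrightarrow> pdy f p = pdy g p"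
  by (rule pdy_eqI[of U p f g, OF _ _ _ has_vector_derivative_pdy]) auto

lemma pdx_const_on: "\<lbrakk>open U; p \<in> U; \<And>q. q \<in> U \<Longrightarrow> f q = c\<rbrakk> \<Longrightarrow> pdx f p = 0"
  by (rule pdx_eqI[where g = "\<lambda>_. c"]) auto

lemma pdy_const_on: "\<lbrakk>open U; p \<in> U; \<And>q. q \<in> U \<Longrightarrow> f q = c\<rbrakk> \<Longrightarrow> pdy f p = 0"
  by (rule pdy_eqI[where g = "\<lambda>_. c"]) auto

context
  fixes f g :: "real \<times> real \<Rightarrow> real" and p :: "real \<times> real"
  assumes f: "f differentiable (at p)" and g: "g differentiable (at p)"
begin

lemma pdx_add: "pdx (\<lambda>q. f q + g q) p = pdx f p + pdx g p"
  by (rule pdx_real_eqI[OF open_UNIV UNIV_I refl])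
     (auto intro!: derivative_eq_intros has_field_derivative_pdx f g)

lemma pdy_add: "pdy (\<lambda>q. f q + g q) p = pdy f p + pdy g p"
  by (rule pdy_real_eqI[OF open_UNIV UNIV_I refl])
     (auto intro!: derivative_eq_intros has_field_derivative_pdy f g)

lemma pdx_mult: "pdx (\<lambda>q. f q * g q) p = pdx f p * g p + f p * pdx g p"
  by (rule pdx_real_eqI[OF open_UNIV UNIV_I refl])
     (auto intro!: derivative_eq_intros has_field_derivative_pdx f g)

lemma pdy_mult: "pdy (\<lambda>q. f q * g q) p = pdy f p * g p + f p * pdy g p"
  by (rule pdy_real_eqI[OF open_UNIV UNIV_I refl])
     (auto intro!: derivative_eq_intros has_field_derivative_pdy f g)

end

lemma pdx_compose:
  fixes f :: "real \<times> real \<Rightarrow> real"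
  assumes "f differentiable (at p)" "(\<phi> has_field_derivative d) (at (f p))"
  shows "pdx (\<lambda>q. \<phi> (f q)) p = d * pdx f p"
proof (rule pdx_real_eqI[OF open_UNIV UNIV_I refl])
  have "(\<phi> has_field_derivative d) (at (f (fst p, snd p)))" using assms(2) by simp
  from DERIV_chain2[OF this has_field_derivative_pdx[OF assms(1)]]
  show "((\<lambda>t. \<phi> (f (t, snd p))) has_field_derivative d * pdx f p) (at (fst p))" .
qed

lemma pdy_compose:
  fixes f :: "real \<times> real \<Rightarrow> real"
  assumes "f differentiable (at p)" "(\<phi> has_field_derivative d) (at (f p))"
  shows "pdy (\<lambda>q. \<phi> (f q)) p = d * pdy f p"
proof (rule pdy_real_eqI[OF open_UNIV UNIV_I refl])
  have "(\<phi> has_field_derivative d) (at (f (fst p, snd p)))" using assms(2) by simp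
  from DERIV_chain2[OF this has_field_derivative_pdy[OF assms(1)]]
  show "((\<lambda>t. \<phi> (f (fst p, t))) has_field_derivative d * pdy f p) (at (snd p))" .
qed

lemma pdx_minus: "f differentiable (at p) \<Longrightarrow> pdx (\<lambda>q. - f q) p = - pdx f p"
  for f :: "real \<times> real \<Rightarrow> real"
  by (rule pdx_real_eqI[OF open_UNIV UNIV_I refl])
     (auto intro!: derivative_eq_intros has_field_derivative_pdx)

lemma pdy_minus: "f differentiable (at p) \<Longrightarrow> pdy (\<lambda>q. - f q) p = - pdy f p"
  for f :: "real \<times> real \<Rightarrow> real"
  by (rule pdy_real_eqI[OF open_UNIV UNIV_I refl])
     (auto intro!: derivative_eq_intros has_field_derivative_pdy)

lemma pdx_inner:
  fixes f g :: "real \<times> real \<Rightarrow> 'a::real_inner"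
  assumes "f differentiable (at p)" "g differentiable (at p)"
  shows "pdx (\<lambda>q. f q \<bullet> g q) p = pdx f p \<bullet> g p + f p \<bullet> pdx g p"
  using bounded_bilinear.has_vector_derivative[OF bounded_bilinear_inner
      has_vector_derivative_pdx[OF assms(1)] has_vector_derivative_pdx[OF assms(2)]]
  by (intro pdx_eqI[OF open_UNIV UNIV_I refl]) (simp add: algebra_simps)

lemma pdy_inner:
  fixes f g :: "real \<times> real \<Rightarrow> 'a::real_inner"
  assumes "f differentiable (at p)" "g differentiable (at p)"
  shows "pdy (\<lambda>q. f q \<bullet> g q) p = pdy f p \<bullet> g p + f p \<bullet> pdy g p"
  using bounded_bilinear.has_vector_derivative[OF bounded_bilinear_inner
      has_vector_derivative_pdy[OF assms(1)] has_vector_derivative_pdy[OF assms(2)]]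
  by (intro pdy_eqI[OF open_UNIV UNIV_I refl]) (simp add: algebra_simps)

lemma pdx_scaleR:
  fixes a :: "real \<times> real \<Rightarrow> real" and f :: "real \<times> real \<Rightarrow> 'a::real_normed_vector"
  assumes "a differentiable (at p)" "f differentiable (at p)"
  shows "pdx (\<lambda>q. a q *\<^sub>R f q) p = pdx a p *\<^sub>R f p + a p *\<^sub>R pdx f p"
  using bounded_bilinear.has_vector_derivative[OF bounded_bilinear_scaleR
      has_vector_derivative_pdx[OF assms(1)] has_vector_derivative_pdx[OF assms(2)]]
  by (intro pdx_eqI[OF open_UNIV UNIV_I refl]) (simp add: algebra_simps)

lemma pdy_scaleR:
  fixes a :: "real \<times> real \<Rightarrow> real" and f :: "real \<times> real \<Rightarrow> 'a::real_normed_vector"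
  assumes "a differentiable (at p)" "f differentiable (at p)"
  shows "pdy (\<lambda>q. a q *\<^sub>R f q) p = pdy a p *\<^sub>R f p + a p *\<^sub>R pdy f p"
  using bounded_bilinear.has_vector_derivative[OF bounded_bilinear_scaleR
      has_vector_derivative_pdy[OF assms(1)] has_vector_derivative_pdy[OF assms(2)]]
  by (intro pdy_eqI[OF open_UNIV UNIV_I refl]) (simp add: algebra_simps)

lemma pdx_vec_nth:
  fixes f :: "real \<times> real \<Rightarrow> real^'n"
  shows "f differentiable (at p) \<Longrightarrow> pdx (\<lambda>q. f q $ i) p = pdx f p $ i"
  by (rule pdx_eqI[OF open_UNIV UNIV_I refl], rule bounded_linear.has_vector_derivative[OF
        bounded_linear_vec_nth has_vector_derivative_pdx])

lemma pdy_vec_nth: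
  fixes f :: "real \<times> real \<Rightarrow> real^'n"
  shows "f differentiable (at p) \<Longrightarrow> pdy (\<lambda>q. f q $ i) p = pdy f p $ i"
  by (rule pdy_eqI[OF open_UNIV UNIV_I refl], rule bounded_linear.has_vector_derivative[OF
        bounded_linear_vec_nth has_vector_derivative_pdy])

lemma has_real_derivative_sgn: "x \<noteq> 0 \<Longrightarrow> (sgn has_real_derivative 0) (at x)" for x :: real
proof -
  assume "x \<noteq> 0"
  then have "open (if 0 < x then {0<..} else {..<0::real})" "x \<in> (if 0 < x then {0<..} else {..<0})"
    "\<And>y. y \<in> (if 0 < x then {0<..} else {..<0}) \<Longrightarrow> sgn x = sgn y"
    by (auto split: if_splits)
  then show ?thesis by (rule has_field_derivative_transform_within_open[OF DERIV_const])
qed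

lemma has_real_derivative_ln_abs: "x \<noteq> 0 \<Longrightarrow> ((\<lambda>y. ln \<bar>y\<bar>) has_real_derivative inverse x) (at x)"
  for x :: real
proof -
  assume "x \<noteq> 0"
  have "ln \<bar>y\<bar> = ln (y * y) / 2" for y :: real
  proof (cases "y = 0")
    case False
    have "ln (y * y) = ln (\<bar>y\<bar> * \<bar>y\<bar>)" by simp
    also have "\<dots> = ln \<bar>y\<bar> + ln \<bar>y\<bar>" by (rule ln_mult_pos) (use False in auto)
    finally show ?thesis by simp
  qed simp
  then have "(\<lambda>y. ln \<bar>y\<bar>) = (\<lambda>y::real. ln (y * y) / 2)" by auto
  moreover have "x * x > 0" using \<open>x \<noteq> 0\<close> not_real_square_gt_zero by blast
  ultimately show ?thesis
    by (auto intro!: derivative_eq_intros simp: field_simps)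
qed

lemma differentiable_at_transform_within_open:
  "\<lbrakk>f differentiable (at x); open S; x \<in> S; \<And>y. y \<in> S \<Longrightarrow> f y = g y\<rbrakk> \<Longrightarrow> g differentiable (at x)"
  unfolding differentiable_def using has_derivative_transform_within_open by blast

lemma pdx_sgn: "\<lbrakk>f differentiable (at p); f p \<noteq> 0\<rbrakk> \<Longrightarrow> pdx (\<lambda>q. sgn (f q)) p = 0"
  for f :: "real \<times> real \<Rightarrow> real"
  using pdx_compose[OF _ has_real_derivative_sgn] by simp

lemma pdy_sgn: "\<lbrakk>f differentiable (at p); f p \<noteq> 0\<rbrakk> \<Longrightarrow> pdy (\<lambda>q. sgn (f q)) p = 0"
  for f :: "real \<times> real \<Rightarrow> real"
  using pdy_compose[OF _ has_real_derivative_sgn] by simp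

lemma smooth_on_differentiable_at: "\<lbrakk>smooth_on U f; open U; p \<in> U\<rbrakk> \<Longrightarrow> f differentiable (at p)"
  by (erule smooth_on.cases) (auto simp: differentiable_on_eq_differentiable_at)

lemma smooth_on_pdx: "smooth_on U f \<Longrightarrow> smooth_on U (pdx f)"
  by (erule smooth_on.cases) auto

lemma smooth_on_pdy: "smooth_on U f \<Longrightarrow> smooth_on U (pdy f)"
  by (erule smooth_on.cases) auto

lemma smooth_on_closed_class:
  assumes U: "open U" and Q: "Q f"
    and closed: "\<And>f. Q f \<Longrightarrow> (\<forall>q\<in>U. f differentiable (at q)) \<and>
       (\<exists>g. Q g \<and> (\<forall>q\<in>U. pdx f q = g q)) \<and> (\<exists>g. Q g \<and> (\<forall>q\<in>U. pdy f q = g q))"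
  shows "smooth_on U f"
proof -
  define P where "P g \<longleftrightarrow> (\<exists>f. Q f \<and> (\<forall>q\<in>U. g q = f q))" for g
  have step: "g differentiable_on U \<and> P (pdx g) \<and> P (pdy g)" if "P g" for g
  proof -
    obtain f where f: "Q f" and g: "\<forall>q\<in>U. g q = f q" using \<open>P g\<close> by (auto simp: P_def)
    obtain fx fy where d: "\<forall>q\<in>U. f differentiable (at q)"
      and fx: "Q fx" "\<forall>q\<in>U. pdx f q = fx q" and fy: "Q fy" "\<forall>q\<in>U. pdy f q = fy q"
      using closed[OF f] by blast
    have "g differentiable (at q)" if "q \<in> U" for q
      using d g that by (auto intro: differentiable_at_transform_within_open[OF _ U])
    then have "g differentiable_on U" by (simp add: differentiable_on_eq_differentiable_at[OF U])
    moreover have "\<forall>q\<in>U. pdx g q = fx q" "\<forall>q\<in>U. pdy g q = fy q"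
      using pdx_cong[OF U, of _ g f] pdy_cong[OF U, of _ g f] d fx fy g by auto
    ultimately show ?thesis using fx(1) fy(1) unfolding P_def by blast
  qed
  have "P f" using Q by (auto simp: P_def)
  then show ?thesis
  proof (coinduction arbitrary: f rule: smooth_on.coinduct)
    case (smooth_on g)
    then show ?case using step by blast
  qed
qed

lemma smooth_on_vec_nth:
  fixes f :: "real \<times> real \<Rightarrow> real^'n"
  assumes U: "open U" and f: "smooth_on U f"
  shows "smooth_on U (\<lambda>q. f q $ i)"
proof -
  define Q where "Q g \<longleftrightarrow> (\<exists>f::real \<times> real \<Rightarrow> real^'n. smooth_on U f \<and> g = (\<lambda>q. f q $ i))" for g
  show ?thesis
  proof (rule smooth_on_closed_class[OF U, of Q])
    show "Q (\<lambda>q. f q $ i)" using f by (auto simp: Q_def)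
  next
    fix g assume "Q g"
    then obtain f :: "real \<times> real \<Rightarrow> real^'n" where f: "smooth_on U f" and g: "g = (\<lambda>q. f q $ i)"
      by (auto simp: Q_def)
    have fd: "f differentiable (at q)" if "q \<in> U" for q
      using smooth_on_differentiable_at[OF f U that] .
    have "\<forall>q\<in>U. g differentiable (at q)"
      using differentiable_chain_at[OF fd bounded_linear_imp_differentiable[OF bounded_linear_vec_nth]]
      by (simp add: g o_def)
    moreover have "Q (\<lambda>q. pdx f q $ i)" "Q (\<lambda>q. pdy f q $ i)"
      using smooth_on_pdx[OF f] smooth_on_pdy[OF f] by (auto simp: Q_def)
    moreover have "\<forall>q\<in>U. pdx g q = pdx f q $ i" "\<forall>q\<in>U. pdy g q = pdy f q $ i"
      using pdx_vec_nth[OF fd] pdy_vec_nth[OF fd] by (simp_all add: g)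
    ultimately show "(\<forall>q\<in>U. g differentiable (at q)) \<and>
        (\<exists>g'. Q g' \<and> (\<forall>q\<in>U. pdx g q = g' q)) \<and> (\<exists>g'. Q g' \<and> (\<forall>q\<in>U. pdy g q = g' q))"
      by blast
  qed
qed

section \<open>Symmetry of mixed partial derivatives\<close>

lemma second_difference_pdy_pdx:
  fixes f :: "real \<times> real \<Rightarrow> real"
  assumes s: "0 < s" and square: "{a..a + s} \<times> {b..b + s} \<subseteq> U"
    and f: "\<And>q. q \<in> U \<Longrightarrow> f differentiable (at q)"
    and fx: "\<And>q. q \<in> U \<Longrightarrow> pdx f differentiable (at q)"
  obtains u v where "(u, v) \<in> {a..a + s} \<times> {b..b + s}"
    and "f (a + s, b + s) - f (a + s, b) - f (a, b + s) + f (a, b) = s * s * pdy (pdx f) (u, v)"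
proof -
  have inU: "(u, v) \<in> U" if "a \<le> u" "u \<le> a + s" "b \<le> v" "v \<le> b + s" for u v
    using square that by auto
  have "\<exists>u. a < u \<and> u < a + s \<and> (f (a + s, b + s) - f (a + s, b)) - (f (a, b + s) - f (a, b))
      = (a + s - a) * (pdx f (u, b + s) - pdx f (u, b))"
    by (rule MVT2[where f = "\<lambda>u. f (u, b + s) - f (u, b)"])
       (use s in \<open>auto intro!: derivative_eq_intros has_field_derivative_pdx_Pair f inU\<close>)
  then obtain u where u: "a < u" "u < a + s"
    "f (a + s, b + s) - f (a + s, b) - f (a, b + s) + f (a, b) = s * (pdx f (u, b + s) - pdx f (u, b))"
    by auto
  have "\<exists>v. b < v \<and> v < b + s \<and> pdx f (u, b + s) - pdx f (u, b) = (b + s - b) * pdy (pdx f) (u, v)"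
    by (rule MVT2[where f = "\<lambda>v. pdx f (u, v)"])
       (use s u in \<open>auto intro!: has_field_derivative_pdy_Pair fx inU\<close>)
  then obtain v where "b < v" "v < b + s" "pdx f (u, b + s) - pdx f (u, b) = s * pdy (pdx f) (u, v)"
    by auto
  with u show ?thesis by (intro that[of u v]) auto
qed

lemma second_difference_pdx_pdy:
  fixes f :: "real \<times> real \<Rightarrow> real"
  assumes s: "0 < s" and square: "{a..a + s} \<times> {b..b + s} \<subseteq> U"
    and f: "\<And>q. q \<in> U \<Longrightarrow> f differentiable (at q)"
    and fy: "\<And>q. q \<in> U \<Longrightarrow> pdy f differentiable (at q)"
  obtains u v where "(u, v) \<in> {a..a + s} \<times> {b..b + s}"
    and "f (a + s, b + s) - f (a + s, b) - f (a, b + s) + f (a, b) = s * s * pdx (pdy f) (u, v)"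
proof -
  have inU: "(u, v) \<in> U" if "a \<le> u" "u \<le> a + s" "b \<le> v" "v \<le> b + s" for u v
    using square that by auto
  have "\<exists>v. b < v \<and> v < b + s \<and> (f (a + s, b + s) - f (a, b + s)) - (f (a + s, b) - f (a, b))
      = (b + s - b) * (pdy f (a + s, v) - pdy f (a, v))"
    by (rule MVT2[where f = "\<lambda>v. f (a + s, v) - f (a, v)"])
       (use s in \<open>auto intro!: derivative_eq_intros has_field_derivative_pdy_Pair f inU\<close>)
  then obtain v where v: "b < v" "v < b + s"
    "f (a + s, b + s) - f (a + s, b) - f (a, b + s) + f (a, b) = s * (pdy f (a + s, v) - pdy f (a, v))"
    by auto
  have "\<exists>u. a < u \<and> u < a + s \<and> pdy f (a + s, v) - pdy f (a, v) = (a + s - a) * pdx (pdy f) (u, v)"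
    by (rule MVT2[where f = "\<lambda>u. pdy f (u, v)"])
       (use s v in \<open>auto intro!: has_field_derivative_pdx_Pair fy inU\<close>)
  then obtain u where "a < u" "u < a + s" "pdy f (a + s, v) - pdy f (a, v) = s * pdx (pdy f) (u, v)"
    by auto
  with v show ?thesis by (intro that[of u v]) auto
qed

lemma pdy_pdx_eq_pdx_pdy:
  fixes f :: "real \<times> real \<Rightarrow> real"
  assumes U: "open U" and p: "p \<in> U"
    and f: "\<And>q. q \<in> U \<Longrightarrow> f differentiable (at q)"
    and fx: "\<And>q. q \<in> U \<Longrightarrow> pdx f differentiable (at q)"
    and fy: "\<And>q. q \<in> U \<Longrightarrow> pdy f differentiable (at q)"
    and cont: "continuous (at p) (pdy (pdx f))" "continuous (at p) (pdx (pdy f))"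
  shows "pdy (pdx f) p = pdx (pdy f) p"
proof (rule ccontr)
  define \<epsilon> where "\<epsilon> = \<bar>pdy (pdx f) p - pdx (pdy f) p\<bar> / 2"
  assume "pdy (pdx f) p \<noteq> pdx (pdy f) p"
  then have "\<epsilon> > 0" by (simp add: \<epsilon>_def)
  obtain e where e: "e > 0" "ball p e \<subseteq> U" using U p open_contains_ball by blast
  obtain d1 where d1: "d1 > 0" "\<And>q. dist q p < d1 \<Longrightarrow> dist (pdy (pdx f) q) (pdy (pdx f) p) < \<epsilon>"
    using cont(1) \<open>\<epsilon> > 0\<close> unfolding continuous_at_eps_delta by blast
  obtain d2 where d2: "d2 > 0" "\<And>q. dist q p < d2 \<Longrightarrow> dist (pdx (pdy f) q) (pdx (pdy f) p) < \<epsilon>"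
    using cont(2) \<open>\<epsilon> > 0\<close> unfolding continuous_at_eps_delta by blast
  define s where "s = min e (min d1 d2) / 3"
  have s: "s > 0" using e d1 d2 by (simp add: s_def)
  have near: "dist q p < min e (min d1 d2)" if "q \<in> {fst p..fst p + s} \<times> {snd p..snd p + s}" for q
  proof -
    have "dist q p = sqrt ((dist (fst q) (fst p))\<^sup>2 + (dist (snd q) (snd p))\<^sup>2)"
      by (metis dist_Pair_Pair prod.collapse)
    also have "\<dots> \<le> \<bar>dist (fst q) (fst p)\<bar> + \<bar>dist (snd q) (snd p)\<bar>"
      by (rule sqrt_sum_squares_le_sum_abs)
    also have "\<dots> \<le> 2 * s" using that by (auto simp: dist_real_def)
    finally show ?thesis using s unfolding s_def by linarith
  qed
  then have square: "{fst p..fst p + s} \<times> {snd p..snd p + s} \<subseteq> U"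
    using e by (force simp: dist_commute)
  obtain u0 v0 where q0: "(u0, v0) \<in> {fst p..fst p + s} \<times> {snd p..snd p + s}"
    and \<Delta>0: "f (fst p + s, snd p + s) - f (fst p + s, snd p) - f (fst p, snd p + s) + f (fst p, snd p)
        = s * s * pdy (pdx f) (u0, v0)"
    by (rule second_difference_pdy_pdx[OF s square f fx])
  obtain u1 v1 where q1: "(u1, v1) \<in> {fst p..fst p + s} \<times> {snd p..snd p + s}"
    and \<Delta>1: "f (fst p + s, snd p + s) - f (fst p + s, snd p) - f (fst p, snd p + s) + f (fst p, snd p)
        = s * s * pdx (pdy f) (u1, v1)"
    by (rule second_difference_pdx_pdy[OF s square f fy])
  have eq: "pdy (pdx f) (u0, v0) = pdx (pdy f) (u1, v1)" using \<Delta>0 \<Delta>1 s by simp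
  have "dist (pdy (pdx f) (u0, v0)) (pdy (pdx f) p) < \<epsilon>" using d1(2) near[OF q0] by simp
  moreover have "dist (pdx (pdy f) (u1, v1)) (pdx (pdy f) p) < \<epsilon>" using d2(2) near[OF q1] by simp
  moreover have "\<bar>x - a\<bar> < \<bar>a - b\<bar> / 2 \<Longrightarrow> \<bar>x - b\<bar> < \<bar>a - b\<bar> / 2 \<Longrightarrow> False" for x a b :: real
    by (simp add: abs_if split: if_splits)
  ultimately show False unfolding \<epsilon>_def dist_real_def eq by blast
qed

lemma smooth_on_pdy_pdx_eq_pdx_pdy:
  fixes f :: "real \<times> real \<Rightarrow> real"
  assumes "open U" "p \<in> U" "smooth_on U f"
  shows "pdy (pdx f) p = pdx (pdy f) p"
  using assms by (intro pdy_pdx_eq_pdx_pdy[OF assms(1,2)] differentiable_imp_continuous_within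
      smooth_on_differentiable_at smooth_on_pdx smooth_on_pdy)

lemma smooth_on_pdy_pdx_eq_pdx_pdy_vec:
  fixes f :: "real \<times> real \<Rightarrow> real^'n"
  assumes U: "open U" and p: "p \<in> U" and f: "smooth_on U f"
  shows "pdy (pdx f) p = pdx (pdy f) p"
proof (subst vec_eq_iff, rule allI)
  fix i
  have d: "g differentiable (at q)" if "smooth_on U g" "q \<in> U" for g :: "real \<times> real \<Rightarrow> real^'n" and q
    using smooth_on_differentiable_at[OF that(1) U that(2)] .
  let ?fi = "\<lambda>q. f q $ i"
  have fi: "smooth_on U ?fi" by (rule smooth_on_vec_nth[OF U f])
  have "pdy (pdx f) p $ i = pdy (\<lambda>q. pdx f q $ i) p"
    by (rule pdy_vec_nth[symmetric], rule d[OF smooth_on_pdx[OF f] p])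
  also have "\<dots> = pdy (pdx ?fi) p"
    by (rule pdy_cong[OF U p pdx_vec_nth[OF d[OF f], symmetric]])
       (auto intro: smooth_on_differentiable_at[OF smooth_on_pdx[OF fi] U p])
  also have "\<dots> = pdx (pdy ?fi) p"
    by (rule smooth_on_pdy_pdx_eq_pdx_pdy[OF U p fi])
  also have "\<dots> = pdx (\<lambda>q. pdy f q $ i) p"
    by (rule pdx_cong[OF U p pdy_vec_nth[OF d[OF f]]])
       (auto intro: smooth_on_differentiable_at[OF smooth_on_vec_nth[OF U smooth_on_pdy[OF f]] U p])
  also have "\<dots> = pdx (pdy f) p $ i"
    by (rule pdx_vec_nth, rule d[OF smooth_on_pdy[OF f] p])
  finally show "pdy (pdx f) p $ i = pdx (pdy f) p $ i" .
qed

section \<open>Functions built from smooth ones\<close>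

inductive smooth_generated :: "(real \<times> real) set \<Rightarrow> (real \<times> real \<Rightarrow> real) \<Rightarrow> bool" for U where
  base: "smooth_on U f \<Longrightarrow> smooth_generated U f"
| const: "smooth_generated U (\<lambda>q. c)"
| add: "smooth_generated U f \<Longrightarrow> smooth_generated U g \<Longrightarrow> smooth_generated U (\<lambda>q. f q + g q)"
| mult: "smooth_generated U f \<Longrightarrow> smooth_generated U g \<Longrightarrow> smooth_generated U (\<lambda>q. f q * g q)"
| inverse: "smooth_generated U f \<Longrightarrow> \<forall>q\<in>U. f q \<noteq> 0 \<Longrightarrow> smooth_generated U (\<lambda>q. inverse (f q))"
| ln: "smooth_generated U f \<Longrightarrow> \<forall>q\<in>U. f q > 0 \<Longrightarrow> smooth_generated U (\<lambda>q. ln (f q))"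
| exp: "smooth_generated U f \<Longrightarrow> smooth_generated U (\<lambda>q. exp (f q))"
| sinh: "smooth_generated U f \<Longrightarrow> smooth_generated U (\<lambda>q. sinh (f q))"
| cosh: "smooth_generated U f \<Longrightarrow> smooth_generated U (\<lambda>q. cosh (f q))"
| arsinh: "smooth_generated U f \<Longrightarrow> smooth_generated U (\<lambda>q. arsinh (f q))"
| sgn: "smooth_generated U f \<Longrightarrow> \<forall>q\<in>U. f q \<noteq> 0 \<Longrightarrow> smooth_generated U (\<lambda>q. sgn (f q))"

lemma smooth_generated_minus: "smooth_generated U f \<Longrightarrow> smooth_generated U (\<lambda>q. - f q)"
  using smooth_generated.mult[OF smooth_generated.const[of U "- 1"]] by simp

lemma smooth_generated_diff:
  "smooth_generated U f \<Longrightarrow> smooth_generated U g \<Longrightarrow> smooth_generated U (\<lambda>q. f q - g q)"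
  using smooth_generated.add[OF _ smooth_generated_minus] by simp

lemma smooth_generated_divide:
  "smooth_generated U f \<Longrightarrow> smooth_generated U g \<Longrightarrow> \<forall>q\<in>U. g q \<noteq> 0 \<Longrightarrow> smooth_generated U (\<lambda>q. f q / g q)"
  using smooth_generated.mult[OF _ smooth_generated.inverse] by (simp add: divide_inverse)

lemma smooth_generated_power2: "smooth_generated U f \<Longrightarrow> smooth_generated U (\<lambda>q. (f q)\<^sup>2)"
  using smooth_generated.mult by (simp add: power2_eq_square)

definition partials_generated :: "(real \<times> real) set \<Rightarrow> (real \<times> real \<Rightarrow> real) \<Rightarrow> bool" where
  "partials_generated U f \<longleftrightarrow> (\<forall>p\<in>U. f differentiable (at p)) \<and>
     (\<exists>g. smooth_generated U g \<and> (\<forall>p\<in>U. pdx f p = g p)) \<and>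
     (\<exists>g. smooth_generated U g \<and> (\<forall>p\<in>U. pdy f p = g p))"

lemma partials_generated_const: "partials_generated U (\<lambda>q. c)"
proof -
  have "pdx (\<lambda>q. c) p = 0" "pdy (\<lambda>q. c) p = 0" for p
    by (simp_all add: pdx_const_on[OF open_UNIV] pdy_const_on[OF open_UNIV])
  then show ?thesis
    unfolding partials_generated_def using smooth_generated.const[of U 0] by auto
qed

lemma partials_generated_add:
  assumes "partials_generated U f" "partials_generated U g"
  shows "partials_generated U (\<lambda>q. f q + g q)"
proof -
  obtain fx fy gx gy where
    "\<forall>p\<in>U. f differentiable (at p)" "\<forall>p\<in>U. g differentiable (at p)"
    "smooth_generated U fx" "\<forall>p\<in>U. pdx f p = fx p" "smooth_generated U fy" "\<forall>p\<in>U. pdy f p = fy p"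
    "smooth_generated U gx" "\<forall>p\<in>U. pdx g p = gx p" "smooth_generated U gy" "\<forall>p\<in>U. pdy g p = gy p"
    using assms unfolding partials_generated_def by blast
  then show ?thesis unfolding partials_generated_def
    by (intro conjI exI[of _ "\<lambda>q. fx q + gx q"] exI[of _ "\<lambda>q. fy q + gy q"])
       (auto simp: pdx_add pdy_add intro: smooth_generated.add)
qed

lemma partials_generated_mult:
  assumes "smooth_generated U f" "smooth_generated U g" "partials_generated U f" "partials_generated U g"
  shows "partials_generated U (\<lambda>q. f q * g q)"
proof -
  obtain fx fy gx gy where
    "\<forall>p\<in>U. f differentiable (at p)" "\<forall>p\<in>U. g differentiable (at p)"
    "smooth_generated U fx" "\<forall>p\<in>U. pdx f p = fx p" "smooth_generated U fy" "\<forall>p\<in>U. pdy f p = fy p"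
    "smooth_generated U gx" "\<forall>p\<in>U. pdx g p = gx p" "smooth_generated U gy" "\<forall>p\<in>U. pdy g p = gy p"
    using assms(3,4) unfolding partials_generated_def by blast
  with assms(1,2) show ?thesis unfolding partials_generated_def
    by (intro conjI exI[of _ "\<lambda>q. fx q * g q + f q * gx q"] exI[of _ "\<lambda>q. fy q * g q + f q * gy q"])
       (auto simp: pdx_mult pdy_mult intro: smooth_generated.add smooth_generated.mult)
qed

lemma partials_generated_compose:
  assumes f: "partials_generated U f"
    and \<phi>: "\<And>p. p \<in> U \<Longrightarrow> (\<phi> has_real_derivative d p) (at (f p))" and d: "smooth_generated U d"
  shows "partials_generated U (\<lambda>q. \<phi> (f q))"
proof -
  obtain fx fy where fd: "\<forall>p\<in>U. f differentiable (at p)"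
    and fx: "smooth_generated U fx" "\<forall>p\<in>U. pdx f p = fx p"
    and fy: "smooth_generated U fy" "\<forall>p\<in>U. pdy f p = fy p"
    using f unfolding partials_generated_def by blast
  have "(\<lambda>q. \<phi> (f q)) differentiable (at p)" if "p \<in> U" for p
    using differentiable_chain_at[OF fd[rule_format, OF that]
        differentiableI[OF has_field_derivative_imp_has_derivative[OF \<phi>[OF that]]]]
    by (simp add: o_def)
  moreover have "pdx (\<lambda>q. \<phi> (f q)) p = d p * fx p" "pdy (\<lambda>q. \<phi> (f q)) p = d p * fy p" if "p \<in> U" for p
    using pdx_compose[OF _ \<phi>] pdy_compose[OF _ \<phi>] fd fx fy that by auto
  ultimately show ?thesis unfolding partials_generated_def
    using d fx fy by (intro conjI exI[of _ "\<lambda>q. d q * fx q"] exI[of _ "\<lambda>q. d q * fy q"])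
      (auto intro: smooth_generated.mult)
qed

lemma smooth_generated_partials:
  assumes U: "open U" and "smooth_generated U f"
  shows "partials_generated U f"
  using assms(2)
proof induction
  case (base f)
  then show ?case unfolding partials_generated_def
    using smooth_on_differentiable_at[OF _ U] smooth_on_pdx smooth_on_pdy smooth_generated.base by blast
next
  case (inverse f)
  have "smooth_generated U (\<lambda>q. - (inverse (f q) * inverse (f q)))"
    by (intro smooth_generated_minus smooth_generated.intros inverse.hyps)
  then show ?case
    by (rule partials_generated_compose[OF inverse.IH, rotated])
       (use inverse.hyps in \<open>auto intro!: derivative_eq_intros\<close>)
next
  case (ln f)
  then show ?case
    by (intro partials_generated_compose[OF ln.IH _ smooth_generated.inverse[OF ln.hyps(1)]])
       (auto intro!: DERIV_ln)
next
  case (arsinh f)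
  have "smooth_generated U (\<lambda>q. inverse (cosh (arsinh (f q))))"
    by (simp add: smooth_generated.inverse smooth_generated.cosh smooth_generated.arsinh arsinh.hyps)
  then show ?case
    by (rule partials_generated_compose[OF arsinh.IH, rotated])
       (auto intro!: derivative_eq_intros simp: cosh_arsinh_real divide_inverse)
next
  case (exp f)
  then show ?case
    by (intro partials_generated_compose[OF exp.IH _ smooth_generated.exp[OF exp.hyps]]) auto
next
  case (sinh f)
  then show ?case
    by (intro partials_generated_compose[OF sinh.IH _ smooth_generated.cosh[OF sinh.hyps]])
       (auto intro!: derivative_eq_intros)
next
  case (cosh f)
  then show ?case
    by (intro partials_generated_compose[OF cosh.IH _ smooth_generated.sinh[OF cosh.hyps]])
       (auto intro!: derivative_eq_intros)
next
  case (sgn f)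
  then show ?case
    by (intro partials_generated_compose[OF sgn.IH _ smooth_generated.const[of U 0]])
       (auto intro!: has_real_derivative_sgn)
qed (auto intro: partials_generated_const partials_generated_add partials_generated_mult)

lemma smooth_generated_smooth_on: "\<lbrakk>open U; smooth_generated U f\<rbrakk> \<Longrightarrow> smooth_on U f"
  by (rule smooth_on_closed_class[where Q = "smooth_generated U"])
     (auto dest: smooth_generated_partials simp: partials_generated_def)

lemma smooth_generated_differentiable:
  "\<lbrakk>open U; smooth_generated U f; q \<in> U\<rbrakk> \<Longrightarrow> f differentiable (at q)"
  using smooth_generated_partials by (auto simp: partials_generated_def)

section \<open>Gauss--Codazzi equations of a curvature line frame\<close>

lemma pdx_inner_const_on:
  fixes f g :: "real \<times> real \<Rightarrow> 'a::real_inner"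
  assumes "open U" "p \<in> U" "\<And>q. q \<in> U \<Longrightarrow> f q \<bullet> g q = c"
    and "f differentiable (at p)" "g differentiable (at p)"
  shows "pdx f p \<bullet> g p + f p \<bullet> pdx g p = 0"
  using pdx_inner[OF assms(4,5)] pdx_const_on[OF assms(1,2), of "\<lambda>q. f q \<bullet> g q"] assms(3) by simp

lemma pdy_inner_const_on:
  fixes f g :: "real \<times> real \<Rightarrow> 'a::real_inner"
  assumes "open U" "p \<in> U" "\<And>q. q \<in> U \<Longrightarrow> f q \<bullet> g q = c"
    and "f differentiable (at p)" "g differentiable (at p)"
  shows "pdy f p \<bullet> g p + f p \<bullet> pdy g p = 0"
  using pdy_inner[OF assms(4,5)] pdy_const_on[OF assms(1,2), of "\<lambda>q. f q \<bullet> g q"] assms(3) by simp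

lemma inner_orthonormal_frame_expansion:
  fixes X Y u v :: "real^3"
  assumes "norm X = 1" "norm Y = 1" "X \<bullet> Y = 0"
  shows "u \<bullet> v = (u \<bullet> X) * (v \<bullet> X) + (u \<bullet> Y) * (v \<bullet> Y) + (u \<bullet> cross3 X Y) * (v \<bullet> cross3 X Y)"
proof -
  define N where "N = cross3 X Y"
  have XX: "X \<bullet> X = 1" "Y \<bullet> Y = 1" using assms by (simp_all add: dot_square_norm)
  have NX: "N \<bullet> X = 0" "N \<bullet> Y = 0" unfolding N_def by (simp_all add: dot_cross_self inner_commute)
  have "(norm N)\<^sup>2 + (X \<bullet> Y)\<^sup>2 = (norm X * norm Y)\<^sup>2" unfolding N_def by (rule norm_cross_dot)
  then have NN: "N \<bullet> N = 1" using assms by (simp add: dot_square_norm)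
  define w where "w = u - (u \<bullet> X) *\<^sub>R X - (u \<bullet> Y) *\<^sub>R Y - (u \<bullet> N) *\<^sub>R N"
  have w: "w \<bullet> X = 0" "w \<bullet> Y = 0" "w \<bullet> N = 0" unfolding w_def
    using XX NX NN assms(3) by (simp_all add: algebra_simps inner_commute)
  \<comment> \<open>w is orthogonal to N and, by Lagrange's identity, parallel to it\<close>
  have "cross3 N w = (X \<bullet> w) *\<^sub>R Y - (Y \<bullet> w) *\<^sub>R X"
    unfolding N_def by (simp add: cross3_simps forall_3)
  then have "cross3 N w = 0" using w by (simp add: inner_commute)
  moreover have "N \<noteq> 0" using NN by auto
  ultimately have "w = 0" using cross_dot_cancel[of N w 0] w(3) by (simp add: inner_commute)
  then have "u = (u \<bullet> X) *\<^sub>R X + (u \<bullet> Y) *\<^sub>R Y + (u \<bullet> N) *\<^sub>R N" unfolding w_def by (simp add: algebra_simps)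
  then have "u \<bullet> v = ((u \<bullet> X) *\<^sub>R X + (u \<bullet> Y) *\<^sub>R Y + (u \<bullet> N) *\<^sub>R N) \<bullet> v" by simp
  then show ?thesis unfolding N_def by (simp add: inner_add_left inner_add_right inner_commute)
qed

locale curvature_line_frame =
  fixes U :: "(real \<times> real) set"
    and r X Y :: "real \<times> real \<Rightarrow> real^3"
    and A1 A2 H K :: "real \<times> real \<Rightarrow> real"
  assumes open_U: "open U"
    and smooth: "smooth_on U r" "smooth_on U X" "smooth_on U Y"
      "smooth_on U A1" "smooth_on U A2" "smooth_on U H" "smooth_on U K"
    and orthonormal: "\<And>p. p \<in> U \<Longrightarrow> norm (X p) = 1" "\<And>p. p \<in> U \<Longrightarrow> norm (Y p) = 1"
      "\<And>p. p \<in> U \<Longrightarrow> X p \<bullet> Y p = 0"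
    and A_nonzero: "\<And>p. p \<in> U \<Longrightarrow> A1 p \<noteq> 0" "\<And>p. p \<in> U \<Longrightarrow> A2 p \<noteq> 0"
    and pdx_r: "\<And>p. p \<in> U \<Longrightarrow> pdx r p = A1 p *\<^sub>R X p"
    and pdy_r: "\<And>p. p \<in> U \<Longrightarrow> pdy r p = A2 p *\<^sub>R Y p"
    and pdx_N: "\<And>p. p \<in> U \<Longrightarrow> pdx (\<lambda>q. cross3 (X q) (Y q)) p = H p *\<^sub>R X p"
    and pdy_N: "\<And>p. p \<in> U \<Longrightarrow> pdy (\<lambda>q. cross3 (X q) (Y q)) p = K p *\<^sub>R Y p"
begin

abbreviation N :: "real \<times> real \<Rightarrow> real^3" where "N \<equiv> \<lambda>q. cross3 (X q) (Y q)"

lemma frame_differentiable: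
  assumes "q \<in> U"
  shows "X differentiable (at q)" "Y differentiable (at q)" "N differentiable (at q)"
    "pdx X differentiable (at q)" "pdy X differentiable (at q)"
    "pdx Y differentiable (at q)" "pdy Y differentiable (at q)"
    "A1 differentiable (at q)" "A2 differentiable (at q)"
    "H differentiable (at q)" "K differentiable (at q)"
proof -
  show X: "X differentiable (at q)" and Y: "Y differentiable (at q)"
    using smooth assms by (auto intro: smooth_on_differentiable_at[OF _ open_U])
  have "bounded_bilinear (cross3 :: real^3 \<Rightarrow> real^3 \<Rightarrow> real^3)"
    using bilinear_conv_bounded_bilinear bilinear_cross by blast
  then show "N differentiable (at q)"
    using X Y unfolding differentiable_def by (blast intro: bounded_bilinear.FDERIV)
  show "pdx X differentiable (at q)" "pdy X differentiable (at q)"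
    "pdx Y differentiable (at q)" "pdy Y differentiable (at q)"
    "A1 differentiable (at q)" "A2 differentiable (at q)"
    "H differentiable (at q)" "K differentiable (at q)"
    using smooth assms
    by (auto intro: smooth_on_differentiable_at[OF _ open_U] smooth_on_pdx smooth_on_pdy)
qed

lemma frame_inner_derivatives:
  assumes q: "q \<in> U"
  shows "pdx X q \<bullet> X q = 0" "pdy X q \<bullet> X q = 0" "pdx Y q \<bullet> Y q = 0" "pdy Y q \<bullet> Y q = 0"
    "pdx X q \<bullet> Y q = - (X q \<bullet> pdx Y q)" "pdy X q \<bullet> Y q = - (X q \<bullet> pdy Y q)"
    "pdx X q \<bullet> N q = - H q" "pdy X q \<bullet> N q = 0" "pdx Y q \<bullet> N q = 0" "pdy Y q \<bullet> N q = - K q"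
proof -
  note d = frame_differentiable[OF q]
  have XX: "X p \<bullet> X p = 1" "Y p \<bullet> Y p = 1" "X p \<bullet> Y p = 0" "Y p \<bullet> X p = 0" if "p \<in> U" for p
    using orthonormal that by (auto simp: dot_square_norm inner_commute)
  have XN: "X p \<bullet> N p = 0" "Y p \<bullet> N p = 0" for p
    by (simp_all add: dot_cross_self)
  show "pdx X q \<bullet> X q = 0" "pdy X q \<bullet> X q = 0" "pdx Y q \<bullet> Y q = 0" "pdy Y q \<bullet> Y q = 0"
    using pdx_inner_const_on[OF open_U q, of X X] pdy_inner_const_on[OF open_U q, of X X]
      pdx_inner_const_on[OF open_U q, of Y Y] pdy_inner_const_on[OF open_U q, of Y Y] XX d
    by (simp_all add: inner_commute)
  show "pdx X q \<bullet> Y q = - (X q \<bullet> pdx Y q)" "pdy X q \<bullet> Y q = - (X q \<bullet> pdy Y q)"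
    using pdx_inner_const_on[OF open_U q, of X Y] pdy_inner_const_on[OF open_U q, of X Y] XX d
    by (simp_all add: eq_neg_iff_add_eq_0)
  show "pdx X q \<bullet> N q = - H q" "pdy X q \<bullet> N q = 0" "pdx Y q \<bullet> N q = 0" "pdy Y q \<bullet> N q = - K q"
    using pdx_inner_const_on[OF open_U q, of X N] pdy_inner_const_on[OF open_U q, of X N]
      pdx_inner_const_on[OF open_U q, of Y N] pdy_inner_const_on[OF open_U q, of Y N]
      XN XX[OF q] d pdx_N[OF q] pdy_N[OF q]
    by (simp_all add: eq_neg_iff_add_eq_0)
qed

text \<open>The symmetry of the second derivatives of r gives the connection coefficients.\<close>

lemma pdy_A1: "q \<in> U \<Longrightarrow> pdy A1 q = A2 q * (X q \<bullet> pdx Y q)"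
  and pdx_A2: "q \<in> U \<Longrightarrow> pdx A2 q = A1 q * (Y q \<bullet> pdy X q)"
proof -
  assume q: "q \<in> U"
  note d = frame_differentiable[OF q]
  have "pdy (pdx r) q = pdy (\<lambda>q. A1 q *\<^sub>R X q) q"
    by (rule pdy_cong[OF open_U q pdx_r]) (use d in auto)
  also have "\<dots> = pdy A1 q *\<^sub>R X q + A1 q *\<^sub>R pdy X q" by (rule pdy_scaleR) (use d in auto)
  finally have rxy: "pdy (pdx r) q = pdy A1 q *\<^sub>R X q + A1 q *\<^sub>R pdy X q" .
  have "pdx (pdy r) q = pdx (\<lambda>q. A2 q *\<^sub>R Y q) q"
    by (rule pdx_cong[OF open_U q pdy_r]) (use d in auto)
  also have "\<dots> = pdx A2 q *\<^sub>R Y q + A2 q *\<^sub>R pdx Y q" by (rule pdx_scaleR) (use d in auto)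
  finally have ryx: "pdx (pdy r) q = pdx A2 q *\<^sub>R Y q + A2 q *\<^sub>R pdx Y q" .
  have eq: "pdy A1 q *\<^sub>R X q + A1 q *\<^sub>R pdy X q = pdx A2 q *\<^sub>R Y q + A2 q *\<^sub>R pdx Y q"
    using rxy ryx smooth_on_pdy_pdx_eq_pdx_pdy_vec[OF open_U q smooth(1)] by simp
  have XX: "X q \<bullet> X q = 1" "Y q \<bullet> Y q = 1" "X q \<bullet> Y q = 0"
    using orthonormal q by (auto simp: dot_square_norm)
  from arg_cong[OF eq, of "\<lambda>v. v \<bullet> X q"] show "pdy A1 q = A2 q * (X q \<bullet> pdx Y q)"
    using XX frame_inner_derivatives(2)[OF q] by (simp add: inner_add_right inner_commute)
  from arg_cong[OF eq, of "\<lambda>v. v \<bullet> Y q"] show "pdx A2 q = A1 q * (Y q \<bullet> pdy X q)"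
    using XX frame_inner_derivatives(3)[OF q] by (simp add: inner_add_right inner_commute)
qed

lemma codazzi_H: "q \<in> U \<Longrightarrow> pdy H q * A2 q = pdy A1 q * K q"
proof -
  assume q: "q \<in> U"
  note d = frame_differentiable[OF q]
  have "pdx (pdy X) q \<bullet> N q + pdy X q \<bullet> pdx N q = 0"
    by (rule pdx_inner_const_on[OF open_U q frame_inner_derivatives(8)]) (use d in auto)
  then have "pdy (pdx X) q \<bullet> N q = 0"
    using smooth_on_pdy_pdx_eq_pdx_pdy_vec[OF open_U q smooth(2)] pdx_N[OF q]
      frame_inner_derivatives(2)[OF q] by simp
  have "- pdy H q = pdy (\<lambda>q. - H q) q" using pdy_minus d by simp
  also have "\<dots> = pdy (\<lambda>q. pdx X q \<bullet> N q) q"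
    using pdy_cong[OF open_U q, of "\<lambda>q. pdx X q \<bullet> N q" "\<lambda>q. - H q"] frame_inner_derivatives(7) d
    by simp
  also have "\<dots> = pdy (pdx X) q \<bullet> N q + pdx X q \<bullet> pdy N q" by (rule pdy_inner) (use d in auto)
  also have "\<dots> = - K q * (X q \<bullet> pdx Y q)"
    using \<open>pdy (pdx X) q \<bullet> N q = 0\<close> pdy_N[OF q] frame_inner_derivatives(5)[OF q] by simp
  finally show ?thesis using pdy_A1[OF q] by simp
qed

lemma codazzi_K: "q \<in> U \<Longrightarrow> pdx K q * A1 q = pdx A2 q * H q"
proof -
  assume q: "q \<in> U"
  note d = frame_differentiable[OF q]
  have "pdy (pdx Y) q \<bullet> N q + pdx Y q \<bullet> pdy N q = 0"
    by (rule pdy_inner_const_on[OF open_U q frame_inner_derivatives(9)]) (use d in auto)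
  then have "pdx (pdy Y) q \<bullet> N q = 0"
    using smooth_on_pdy_pdx_eq_pdx_pdy_vec[OF open_U q smooth(3)] pdy_N[OF q]
      frame_inner_derivatives(3)[OF q] by simp
  have "- pdx K q = pdx (\<lambda>q. - K q) q" using pdx_minus d by simp
  also have "\<dots> = pdx (\<lambda>q. pdy Y q \<bullet> N q) q"
    using pdx_cong[OF open_U q, of "\<lambda>q. pdy Y q \<bullet> N q" "\<lambda>q. - K q"] frame_inner_derivatives(10) d
    by simp
  also have "\<dots> = pdx (pdy Y) q \<bullet> N q + pdy Y q \<bullet> pdx N q" by (rule pdx_inner) (use d in auto)
  also have "\<dots> = - H q * (Y q \<bullet> pdy X q)"
    using \<open>pdx (pdy Y) q \<bullet> N q = 0\<close> pdx_N[OF q] frame_inner_derivatives(6)[OF q]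
    by (simp add: inner_commute)
  finally show ?thesis using pdx_A2[OF q] by simp
qed

lemma gauss: "q \<in> U \<Longrightarrow> pdy (\<lambda>q. pdy A1 q / A2 q) q + pdx (\<lambda>q. pdx A2 q / A1 q) q + H q * K q = 0"
proof -
  assume q: "q \<in> U"
  note d = frame_differentiable[OF q]
  have "pdy (\<lambda>q. pdy A1 q / A2 q) q = pdy (\<lambda>q. X q \<bullet> pdx Y q) q"
    by (rule pdy_cong[OF open_U q]) (use pdy_A1 A_nonzero d in auto)
  also have "\<dots> = pdy X q \<bullet> pdx Y q + X q \<bullet> pdy (pdx Y) q" by (rule pdy_inner) (use d in auto)
  finally have P: "pdy (\<lambda>q. pdy A1 q / A2 q) q = pdy X q \<bullet> pdx Y q + X q \<bullet> pdy (pdx Y) q" .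
  have "pdx (\<lambda>q. pdx A2 q / A1 q) q = pdx (\<lambda>q. Y q \<bullet> pdy X q) q"
    by (rule pdx_cong[OF open_U q]) (use pdx_A2 A_nonzero d in auto)
  also have "\<dots> = pdx Y q \<bullet> pdy X q + Y q \<bullet> pdx (pdy X) q" by (rule pdx_inner) (use d in auto)
  finally have Q: "pdx (\<lambda>q. pdx A2 q / A1 q) q = pdx Y q \<bullet> pdy X q + Y q \<bullet> pdx (pdy X) q" .
  have "pdy (\<lambda>q. pdx X q \<bullet> Y q + X q \<bullet> pdx Y q) q = 0"
    by (rule pdy_const_on[OF open_U q]) (use frame_inner_derivatives(5) in auto)
  then have E: "pdy (pdx X) q \<bullet> Y q + pdx X q \<bullet> pdy Y q + (pdy X q \<bullet> pdx Y q + X q \<bullet> pdy (pdx Y) q) = 0"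
    using pdy_add[of "\<lambda>q. pdx X q \<bullet> Y q" q "\<lambda>q. X q \<bullet> pdx Y q"] pdy_inner[of "pdx X" q Y]
      pdy_inner[of X q "pdx Y"] d by simp
  have frame: "norm (X q) = 1" "norm (Y q) = 1" "X q \<bullet> Y q = 0" using orthonormal q by auto
  have "pdx Y q \<bullet> pdy X q = 0" "pdx X q \<bullet> pdy Y q = H q * K q"
    using inner_orthonormal_frame_expansion[OF frame, of "pdx Y q" "pdy X q"]
      inner_orthonormal_frame_expansion[OF frame, of "pdx X q" "pdy Y q"]
      frame_inner_derivatives[OF q] by (simp_all add: inner_commute)
  then show ?thesis
    using P Q E smooth_on_pdy_pdx_eq_pdx_pdy_vec[OF open_U q smooth(2)] by (simp add: inner_commute)
qed

end

section \<open>Pointwise algebra of the first kind\<close>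

lemma first_kind_curvature_identity:
  fixes a1 a2 hh k t1 t2 qn :: real
  assumes a1: "a1 \<noteq> 0" and a2: "a2 \<noteq> 0" and qn: "qn \<noteq> 0"
    and equil: "(- hh / a1) * t1 + (- k / a2) * t2 + qn = 0"
    and kind1: "2 * (t2 * a1) * hh - qn * a1\<^sup>2 = - qn"
    and kind2: "2 * (t1 * a2) * k - qn * a2\<^sup>2 = qn"
  shows "(hh * a2 - k * a1)\<^sup>2 = k\<^sup>2 - hh\<^sup>2"
proof -
  have equil': "hh * a2 * t1 + k * a1 * t2 = qn * a1 * a2"
    using equil a1 a2 by (simp add: field_simps)
  have "qn * (hh * a2 - k * a1)\<^sup>2 = hh\<^sup>2 * (qn * a2\<^sup>2) - 2 * hh * k * (qn * a1 * a2) + k\<^sup>2 * (qn * a1\<^sup>2)"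
    by (simp add: power2_eq_square algebra_simps)
  also have "\<dots> = hh\<^sup>2 * (2 * t1 * a2 * k - qn) - 2 * hh * k * (hh * a2 * t1 + k * a1 * t2)
      + k\<^sup>2 * (2 * t2 * a1 * hh + qn)"
    using kind1 kind2 by (simp only: equil') (simp add: algebra_simps)
  also have "\<dots> = qn * (k\<^sup>2 - hh\<^sup>2)"
    by (simp add: power2_eq_square algebra_simps)
  finally show ?thesis using qn by simp
qed

lemma first_kind_parametrization:
  fixes a1 a2 hh k \<epsilon>1 \<epsilon>2 \<xi> \<alpha> h :: real
  assumes hh: "hh \<noteq> 0" and identity: "(hh * a2 - k * a1)\<^sup>2 = k\<^sup>2 - hh\<^sup>2"
    and E: "hh * a2 - k * a1 \<noteq> 0"
    and \<epsilon>1_def: "\<epsilon>1 = sgn (k * (k * a1 - hh * a2))" and \<epsilon>2_def: "\<epsilon>2 = sgn k"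
    and \<xi>_def: "\<xi> = ln (k\<^sup>2 - hh\<^sup>2) / 2" and \<alpha>_def: "\<alpha> = arsinh (\<epsilon>1 * hh * exp (- \<xi>))"
    and h_def: "h = (\<epsilon>1 * a1 - cosh \<alpha>) / sinh \<alpha>"
  shows "a1 = \<epsilon>1 * (cosh \<alpha> + h * sinh \<alpha>)" "a2 = \<epsilon>2 * (sinh \<alpha> + h * cosh \<alpha>)"
    "hh = \<epsilon>1 * (exp \<xi> * sinh \<alpha>)" "k = \<epsilon>2 * (exp \<xi> * cosh \<alpha>)"
proof -
  define E where "E = hh * a2 - k * a1"
  define e where "e = exp \<xi>"
  define S where "S = sinh \<alpha>"
  define C where "C = cosh \<alpha>"
  have D: "k\<^sup>2 - hh\<^sup>2 = E\<^sup>2" using identity by (simp add: E_def)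
  have "E\<^sup>2 > 0" using E by (simp add: E_def)
  have "e\<^sup>2 = exp (\<xi> + \<xi>)" by (simp only: e_def power2_eq_square exp_add)
  also have "\<dots> = E\<^sup>2" using D \<open>E\<^sup>2 > 0\<close> by (simp add: \<xi>_def)
  finally have "e\<^sup>2 = E\<^sup>2" .
  moreover have "e > 0" by (simp add: e_def)
  ultimately have e: "e = \<bar>E\<bar>" "e > 0"
    by (auto simp: power2_eq_iff abs_if)
  have k: "k \<noteq> 0" using D \<open>E\<^sup>2 > 0\<close> zero_le_power2[of hh] by (cases "k = 0") auto
  have "k * a1 - hh * a2 = - E" by (simp add: E_def)
  then have \<epsilon>1: "\<epsilon>1 = - (sgn k * sgn E)" by (simp add: \<epsilon>1_def sgn_mult)
  have sq: "\<epsilon>1 * \<epsilon>1 = 1" "\<epsilon>2 * \<epsilon>2 = 1" "\<epsilon>2 * k = \<bar>k\<bar>"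
    using k E by (auto simp: \<epsilon>1 \<epsilon>2_def E_def sgn_if)
  have \<epsilon>1e: "\<epsilon>1 * e = - (\<epsilon>2 * E)" by (simp add: \<epsilon>1 \<epsilon>2_def e sgn_mult_abs)
  have S: "S = \<epsilon>1 * hh / e" using e by (simp add: S_def \<alpha>_def e_def exp_minus divide_inverse)
  have "C = sqrt (S\<^sup>2 + 1)" by (simp add: C_def S_def \<alpha>_def cosh_arsinh_real)
  also have "S\<^sup>2 + 1 = (\<bar>k\<bar> / e)\<^sup>2"
    using e \<open>e\<^sup>2 = E\<^sup>2\<close> D sq(1) by (simp add: S field_simps power2_eq_square)
  finally have C: "C = \<bar>k\<bar> / e" using e by simp
  show "hh = \<epsilon>1 * (exp \<xi> * sinh \<alpha>)"
    using S e sq(1) by (simp flip: S_def e_def)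
  show "k = \<epsilon>2 * (exp \<xi> * cosh \<alpha>)"
    using C e sq(3) by (simp flip: C_def e_def)
  have S0: "S \<noteq> 0" using S e hh sq(1) by auto
  have hS: "h * S = \<epsilon>1 * a1 - C" using S0 by (simp add: h_def flip: S_def C_def)
  then show "a1 = \<epsilon>1 * (cosh \<alpha> + h * sinh \<alpha>)"
    using sq(1) by (simp add: algebra_simps flip: S_def C_def)
  have CS: "C\<^sup>2 = S\<^sup>2 + 1" by (simp add: C_def S_def cosh_square_eq)
  have "S * (S + h * C) = \<epsilon>1 * a1 * C - 1"
    using hS CS by algebra
  also have "\<dots> = S * (\<epsilon>2 * a2)"
  proof -
    have "hh * (\<epsilon>2 * a2) = \<epsilon>1 * (\<epsilon>1 * a1 * \<bar>k\<bar> - e)"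
      using \<epsilon>1e sq by (simp add: E_def algebra_simps)
    moreover have "C * e = \<bar>k\<bar>" "S * e = \<epsilon>1 * hh" using C S e by simp_all
    ultimately have "e * (\<epsilon>1 * a1 * C - 1) = e * (S * (\<epsilon>2 * a2))"
      using sq(1) by algebra
    then show ?thesis using e by simp
  qed
  finally have "S + h * C = \<epsilon>2 * a2" using S0 by simp
  then show "a2 = \<epsilon>2 * (sinh \<alpha> + h * cosh \<alpha>)"
    using sq(2) by (simp add: algebra_simps flip: S_def C_def)
qed

lemma stress_resultant_T1:
  fixes \<epsilon> \<alpha> h \<xi> a2 k t1 qn :: real
  assumes \<epsilon>: "\<epsilon> * \<epsilon> = 1" and a2: "a2 = \<epsilon> * (sinh \<alpha> + h * cosh \<alpha>)" "a2 \<noteq> 0"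
    and k: "k = \<epsilon> * (exp \<xi> * cosh \<alpha>)"
    and kind2: "2 * (t1 * a2) * k - qn * a2\<^sup>2 = qn"
  shows "t1 = qn * exp (- \<xi>) / 2 * ((2 * h * sinh \<alpha> + (1 + h\<^sup>2) * cosh \<alpha>) / (sinh \<alpha> + h * cosh \<alpha>))"
proof -
  have "a2 * k = (\<epsilon> * \<epsilon>) * (exp \<xi> * cosh \<alpha> * (sinh \<alpha> + h * cosh \<alpha>))"
    "a2\<^sup>2 = (\<epsilon> * \<epsilon>) * (sinh \<alpha> + h * cosh \<alpha>)\<^sup>2"
    unfolding a2(1) k by (simp_all add: power2_eq_square algebra_simps)
  moreover have "t1 * (2 * (a2 * k)) = qn * (1 + a2\<^sup>2)"
    using kind2 by (simp add: algebra_simps)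
  ultimately have "t1 * (2 * (exp \<xi> * cosh \<alpha> * (sinh \<alpha> + h * cosh \<alpha>)))
      = qn * (1 + (sinh \<alpha> + h * cosh \<alpha>)\<^sup>2)"
    using \<epsilon> by simp
  also have "1 + (sinh \<alpha> + h * cosh \<alpha>)\<^sup>2 = (sinh \<alpha>)\<^sup>2 + 1 + 2 * h * sinh \<alpha> * cosh \<alpha> + h\<^sup>2 * (cosh \<alpha>)\<^sup>2"
    by (simp add: power2_eq_square algebra_simps)
  also have "\<dots> = (cosh \<alpha>)\<^sup>2 + 2 * h * sinh \<alpha> * cosh \<alpha> + h\<^sup>2 * (cosh \<alpha>)\<^sup>2"
    by (simp only: cosh_square_eq)
  also have "\<dots> = cosh \<alpha> * (2 * h * sinh \<alpha> + (1 + h\<^sup>2) * cosh \<alpha>)"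
    by (simp add: power2_eq_square algebra_simps)
  finally have "cosh \<alpha> * (t1 * (2 * exp \<xi> * (sinh \<alpha> + h * cosh \<alpha>)))
      = cosh \<alpha> * (qn * (2 * h * sinh \<alpha> + (1 + h\<^sup>2) * cosh \<alpha>))"
    by (simp add: algebra_simps)
  then have "t1 * (2 * exp \<xi> * (sinh \<alpha> + h * cosh \<alpha>)) = qn * (2 * h * sinh \<alpha> + (1 + h\<^sup>2) * cosh \<alpha>)"
    by simp
  moreover have "sinh \<alpha> + h * cosh \<alpha> \<noteq> 0" using a2 by auto
  ultimately have "t1 = qn * (2 * h * sinh \<alpha> + (1 + h\<^sup>2) * cosh \<alpha>) / (2 * exp \<xi> * (sinh \<alpha> + h * cosh \<alpha>))"
    by (simp add: eq_divide_eq)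
  then show ?thesis unfolding exp_minus by (simp add: field_simps)
qed

lemma stress_resultant_T2:
  fixes \<epsilon> \<alpha> h \<xi> a1 hh t2 qn :: real
  assumes \<epsilon>: "\<epsilon> * \<epsilon> = 1" and a1: "a1 = \<epsilon> * (cosh \<alpha> + h * sinh \<alpha>)" "a1 \<noteq> 0"
    and hh: "hh = \<epsilon> * (exp \<xi> * sinh \<alpha>)" "hh \<noteq> 0"
    and kind1: "2 * (t2 * a1) * hh - qn * a1\<^sup>2 = - qn"
  shows "t2 = qn * exp (- \<xi>) / 2 * ((2 * h * cosh \<alpha> + (1 + h\<^sup>2) * sinh \<alpha>) / (cosh \<alpha> + h * sinh \<alpha>))"
proof -
  have "a1 * hh = (\<epsilon> * \<epsilon>) * (exp \<xi> * sinh \<alpha> * (cosh \<alpha> + h * sinh \<alpha>))"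
    "a1\<^sup>2 = (\<epsilon> * \<epsilon>) * (cosh \<alpha> + h * sinh \<alpha>)\<^sup>2"
    unfolding a1(1) hh(1) by (simp_all add: power2_eq_square algebra_simps)
  moreover have "t2 * (2 * (a1 * hh)) = qn * (a1\<^sup>2 - 1)"
    using kind1 by (simp add: algebra_simps)
  ultimately have "t2 * (2 * (exp \<xi> * sinh \<alpha> * (cosh \<alpha> + h * sinh \<alpha>)))
      = qn * ((cosh \<alpha> + h * sinh \<alpha>)\<^sup>2 - 1)"
    using \<epsilon> by simp
  also have "(cosh \<alpha> + h * sinh \<alpha>)\<^sup>2 - 1 = (cosh \<alpha>)\<^sup>2 - 1 + 2 * h * sinh \<alpha> * cosh \<alpha> + h\<^sup>2 * (sinh \<alpha>)\<^sup>2"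
    by (simp add: power2_eq_square algebra_simps)
  also have "\<dots> = (sinh \<alpha>)\<^sup>2 + 2 * h * sinh \<alpha> * cosh \<alpha> + h\<^sup>2 * (sinh \<alpha>)\<^sup>2"
    by (simp only: cosh_square_eq add_diff_cancel_right')
  also have "\<dots> = sinh \<alpha> * (2 * h * cosh \<alpha> + (1 + h\<^sup>2) * sinh \<alpha>)"
    by (simp add: power2_eq_square algebra_simps)
  finally have "sinh \<alpha> * (t2 * (2 * (exp \<xi> * (cosh \<alpha> + h * sinh \<alpha>))))
      = sinh \<alpha> * (qn * (2 * h * cosh \<alpha> + (1 + h\<^sup>2) * sinh \<alpha>))"
    by (simp add: algebra_simps)
  moreover have "sinh \<alpha> \<noteq> 0" using hh by auto
  ultimately have "t2 * (2 * exp \<xi> * (cosh \<alpha> + h * sinh \<alpha>)) = qn * (2 * h * cosh \<alpha> + (1 + h\<^sup>2) * sinh \<alpha>)"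
    by (simp add: ac_simps)
  moreover have "cosh \<alpha> + h * sinh \<alpha> \<noteq> 0" using a1 by auto
  ultimately have "t2 = qn * (2 * h * cosh \<alpha> + (1 + h\<^sup>2) * sinh \<alpha>) / (2 * exp \<xi> * (cosh \<alpha> + h * sinh \<alpha>))"
    by (simp add: eq_divide_eq)
  then show ?thesis unfolding exp_minus by (simp add: field_simps)
qed

lemma compatibility_solved_for_\<xi>xy:
  fixes S C h hx hy ax ay \<xi>x \<xi>y \<xi>xy :: real
  assumes S: "S \<noteq> 0" and C: "C \<noteq> 0" and CS: "C\<^sup>2 = S\<^sup>2 + 1"
    and hy: "hy = (h + S / C) * \<xi>y" and hx: "hx = (h + C / S) * \<xi>x"
    and mixed: "(hy - ay / S\<^sup>2) * \<xi>x + (h + C / S) * \<xi>xy = (hx + ax / C\<^sup>2) * \<xi>y + (h + S / C) * \<xi>xy"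
  shows "\<xi>xy = \<xi>x * \<xi>y + (C * ay / S) * \<xi>x + (S * ax / C) * \<xi>y"
proof -
  have "(C / S - S / C) * \<xi>xy = (C / S - S / C) * (\<xi>x * \<xi>y) + ay / S\<^sup>2 * \<xi>x + ax / C\<^sup>2 * \<xi>y"
    using mixed unfolding hy hx by (simp add: algebra_simps)
  moreover have "C / S - S / C = 1 / (S * C)"
    using S C CS by (simp add: field_simps power2_eq_square)
  ultimately have "\<xi>xy / (S * C) = \<xi>x * \<xi>y / (S * C) + ay / S\<^sup>2 * \<xi>x + ax / C\<^sup>2 * \<xi>y"
    by simp
  then show ?thesis using S C by (simp add: field_simps power2_eq_square)
qed

section \<open>The parametrization by h, \<alpha>, \<xi>\<close>

locale first_kind_frame = curvature_line_frame +
  assumes H_nonzero: "\<And>p. p \<in> U \<Longrightarrow> H p \<noteq> 0"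
    and first_kind_identity: "\<And>p. p \<in> U \<Longrightarrow> (H p * A2 p - K p * A1 p)\<^sup>2 = (K p)\<^sup>2 - (H p)\<^sup>2"
    and umbilic_free: "\<And>p. p \<in> U \<Longrightarrow> H p * A2 p - K p * A1 p \<noteq> 0"
begin

text \<open>The third fundamental form dictates \<open>e\<^sup>2\<^sup>\<xi> = K\<^sup>2 - H\<^sup>2\<close> and \<open>sinh \<alpha> = \<plusminus>H e\<^sup>-\<^sup>\<xi>\<close>, and
  \<open>A1 = \<epsilon>1 (cosh \<alpha> + h sinh \<alpha>)\<close> then defines \<open>h\<close>. The sign \<open>\<epsilon>1\<close> is the one for which
  \<open>first_kind_identity\<close> also yields \<open>A2 = \<epsilon>2 (sinh \<alpha> + h cosh \<alpha>)\<close>.\<close>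

definition \<epsilon>1 :: "real \<times> real \<Rightarrow> real" where "\<epsilon>1 q = sgn (K q * (K q * A1 q - H q * A2 q))"
definition \<epsilon>2 :: "real \<times> real \<Rightarrow> real" where "\<epsilon>2 q = sgn (K q)"
definition \<xi> :: "real \<times> real \<Rightarrow> real" where "\<xi> q = ln ((K q)\<^sup>2 - (H q)\<^sup>2) / 2"
definition \<alpha> :: "real \<times> real \<Rightarrow> real" where "\<alpha> q = arsinh (\<epsilon>1 q * H q * exp (- \<xi> q))"
definition h :: "real \<times> real \<Rightarrow> real" where "h q = (\<epsilon>1 q * A1 q - cosh (\<alpha> q)) / sinh (\<alpha> q)"

lemma representation:
  assumes "q \<in> U"
  shows "A1 q = \<epsilon>1 q * (cosh (\<alpha> q) + h q * sinh (\<alpha> q))"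
    and "A2 q = \<epsilon>2 q * (sinh (\<alpha> q) + h q * cosh (\<alpha> q))"
    and "H q = \<epsilon>1 q * (exp (\<xi> q) * sinh (\<alpha> q))"
    and "K q = \<epsilon>2 q * (exp (\<xi> q) * cosh (\<alpha> q))"
  by (rule first_kind_parametrization[OF H_nonzero[OF assms] first_kind_identity[OF assms]
      umbilic_free[OF assms] \<epsilon>1_def \<epsilon>2_def \<xi>_def \<alpha>_def h_def])+

lemma K_nonzero: "q \<in> U \<Longrightarrow> K q \<noteq> 0"
proof
  assume "q \<in> U" "K q = 0"
  then have "(H q * A2 q)\<^sup>2 + (H q)\<^sup>2 = 0" using first_kind_identity[of q] by simp
  then show False using H_nonzero[OF \<open>q \<in> U\<close>] by (simp add: sum_power2_eq_zero_iff)
qed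

lemma \<epsilon>1_argument_nonzero: "q \<in> U \<Longrightarrow> K q * (K q * A1 q - H q * A2 q) \<noteq> 0"
  using K_nonzero[of q] umbilic_free[of q] by auto

lemma sign_squares: "q \<in> U \<Longrightarrow> \<epsilon>1 q * \<epsilon>1 q = 1" "q \<in> U \<Longrightarrow> \<epsilon>2 q * \<epsilon>2 q = 1"
  using \<epsilon>1_argument_nonzero[of q] K_nonzero[of q] by (simp_all add: \<epsilon>1_def \<epsilon>2_def)

lemma sinh_\<alpha>_nonzero: "q \<in> U \<Longrightarrow> sinh (\<alpha> q) \<noteq> 0"
  using representation(3) H_nonzero by fastforce

lemma smooth_generated_parameters:
  "smooth_generated U \<epsilon>1" "smooth_generated U \<epsilon>2" "smooth_generated U \<xi>"
  "smooth_generated U \<alpha>" "smooth_generated U h"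
proof -
  have base: "smooth_generated U A1" "smooth_generated U A2"
    "smooth_generated U H" "smooth_generated U K"
    using smooth by (auto intro: smooth_generated.base)
  have "\<forall>q\<in>U. K q * (K q * A1 q - H q * A2 q) \<noteq> 0"
    using \<epsilon>1_argument_nonzero by blast
  then show \<epsilon>1: "smooth_generated U \<epsilon>1" unfolding \<epsilon>1_def[abs_def]
    by (intro smooth_generated.sgn smooth_generated.mult smooth_generated_diff base)
  show "smooth_generated U \<epsilon>2" unfolding \<epsilon>2_def[abs_def]
    using K_nonzero by (intro smooth_generated.sgn base) auto
  have "\<forall>q\<in>U. (K q)\<^sup>2 - (H q)\<^sup>2 > 0"
    using first_kind_identity umbilic_free by (metis zero_less_power2 diff_gt_0_iff_gt)
  then show \<xi>: "smooth_generated U \<xi>" unfolding \<xi>_def[abs_def]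
    by (intro smooth_generated_divide smooth_generated.ln smooth_generated_diff smooth_generated_power2
        smooth_generated.const base) auto
  show \<alpha>: "smooth_generated U \<alpha>" unfolding \<alpha>_def[abs_def]
    by (intro smooth_generated.arsinh smooth_generated.mult smooth_generated.exp smooth_generated_minus
        \<epsilon>1 \<xi> base)
  show "smooth_generated U h" unfolding h_def[abs_def]
    using sinh_\<alpha>_nonzero by (intro smooth_generated_divide smooth_generated_diff smooth_generated.mult
        smooth_generated.sinh smooth_generated.cosh \<epsilon>1 \<alpha> base) auto
qed

lemma smooth_on_parameters: "smooth_on U \<xi>" "smooth_on U \<alpha>" "smooth_on U h"
  using smooth_generated_parameters by (auto intro: smooth_generated_smooth_on[OF open_U])

lemma differentiable_parameters:
  assumes "q \<in> U"
  shows "\<epsilon>1 differentiable (at q)" "\<epsilon>2 differentiable (at q)"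
    "\<xi> differentiable (at q)" "\<alpha> differentiable (at q)" "h differentiable (at q)"
    "pdx \<xi> differentiable (at q)" "pdy \<xi> differentiable (at q)"
    "pdx \<alpha> differentiable (at q)" "pdy \<alpha> differentiable (at q)"
    "pdx h differentiable (at q)" "pdy h differentiable (at q)"
  using smooth_generated_parameters assms smooth_on_parameters
  by (auto intro: smooth_generated_differentiable[OF open_U] smooth_on_differentiable_at[OF _ open_U]
      smooth_on_pdx smooth_on_pdy)

lemma pdx_pdy_signs:
  assumes "q \<in> U"
  shows "pdx \<epsilon>1 q = 0" "pdy \<epsilon>1 q = 0" "pdx \<epsilon>2 q = 0" "pdy \<epsilon>2 q = 0"
proof -
  have "(\<lambda>q. K q * (K q * A1 q - H q * A2 q)) differentiable (at q)" "K differentiable (at q)"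
    using frame_differentiable[OF assms] by auto
  moreover have "K q * (K q * A1 q - H q * A2 q) \<noteq> 0" "K q \<noteq> 0"
    using \<epsilon>1_argument_nonzero[OF assms] K_nonzero[OF assms] by auto
  ultimately show "pdx \<epsilon>1 q = 0" "pdy \<epsilon>1 q = 0" "pdx \<epsilon>2 q = 0" "pdy \<epsilon>2 q = 0"
    unfolding \<epsilon>1_def[abs_def] \<epsilon>2_def[abs_def] by (simp_all add: pdx_sgn pdy_sgn)
qed

lemma signs_nonzero: "q \<in> U \<Longrightarrow> \<epsilon>1 q \<noteq> 0" "q \<in> U \<Longrightarrow> \<epsilon>2 q \<noteq> 0"
  using sign_squares by fastforce+

lemma pdx_pdy_representation:
  assumes q: "q \<in> U"
  shows "pdy A1 q = \<epsilon>1 q * (sinh (\<alpha> q) * pdy \<alpha> q + pdy h q * sinh (\<alpha> q) + h q * cosh (\<alpha> q) * pdy \<alpha> q)"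
    and "pdx A2 q = \<epsilon>2 q * (cosh (\<alpha> q) * pdx \<alpha> q + pdx h q * cosh (\<alpha> q) + h q * sinh (\<alpha> q) * pdx \<alpha> q)"
    and "pdy H q = \<epsilon>1 q * exp (\<xi> q) * (pdy \<xi> q * sinh (\<alpha> q) + cosh (\<alpha> q) * pdy \<alpha> q)"
    and "pdx K q = \<epsilon>2 q * exp (\<xi> q) * (pdx \<xi> q * cosh (\<alpha> q) + sinh (\<alpha> q) * pdx \<alpha> q)"
proof -
  note facts = differentiable_parameters[OF q] pdx_pdy_signs[OF q]
  show "pdy A1 q = \<epsilon>1 q * (sinh (\<alpha> q) * pdy \<alpha> q + pdy h q * sinh (\<alpha> q) + h q * cosh (\<alpha> q) * pdy \<alpha> q)"
    by (rule pdy_real_eqI[OF open_U q representation(1)])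
       (use facts in \<open>auto intro!: derivative_eq_intros has_field_derivative_pdy simp: algebra_simps\<close>)
  show "pdx A2 q = \<epsilon>2 q * (cosh (\<alpha> q) * pdx \<alpha> q + pdx h q * cosh (\<alpha> q) + h q * sinh (\<alpha> q) * pdx \<alpha> q)"
    by (rule pdx_real_eqI[OF open_U q representation(2)])
       (use facts in \<open>auto intro!: derivative_eq_intros has_field_derivative_pdx simp: algebra_simps\<close>)
  show "pdy H q = \<epsilon>1 q * exp (\<xi> q) * (pdy \<xi> q * sinh (\<alpha> q) + cosh (\<alpha> q) * pdy \<alpha> q)"
    by (rule pdy_real_eqI[OF open_U q representation(3)])
       (use facts in \<open>auto intro!: derivative_eq_intros has_field_derivative_pdy simp: algebra_simps\<close>)
  show "pdx K q = \<epsilon>2 q * exp (\<xi> q) * (pdx \<xi> q * cosh (\<alpha> q) + sinh (\<alpha> q) * pdx \<alpha> q)"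
    by (rule pdx_real_eqI[OF open_U q representation(4)])
       (use facts in \<open>auto intro!: derivative_eq_intros has_field_derivative_pdx simp: algebra_simps\<close>)
qed

lemma pdy_h: "q \<in> U \<Longrightarrow> pdy h q = (h q + tanh (\<alpha> q)) * pdy \<xi> q"
proof -
  assume q: "q \<in> U"
  let ?S = "sinh (\<alpha> q)" and ?C = "cosh (\<alpha> q)"
  have "(\<epsilon>1 q * \<epsilon>2 q * exp (\<xi> q)) * ((pdy \<xi> q * ?S + ?C * pdy \<alpha> q) * (?S + h q * ?C))
      = (\<epsilon>1 q * \<epsilon>2 q * exp (\<xi> q)) * ((?S * pdy \<alpha> q + pdy h q * ?S + h q * ?C * pdy \<alpha> q) * ?C)"
    using codazzi_H[OF q] unfolding pdx_pdy_representation(1,3)[OF q] representation(2,4)[OF q]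
    by (simp add: ac_simps)
  then have "(pdy \<xi> q * ?S + ?C * pdy \<alpha> q) * (?S + h q * ?C)
      = (?S * pdy \<alpha> q + pdy h q * ?S + h q * ?C * pdy \<alpha> q) * ?C"
    using signs_nonzero[OF q] by simp
  then have "?S * (pdy \<xi> q * (?S + h q * ?C)) = ?S * (pdy h q * ?C)"
    by (simp add: algebra_simps)
  then have "pdy \<xi> q * (?S + h q * ?C) = pdy h q * ?C"
    by (rule mult_left_cancel[THEN iffD1, OF sinh_\<alpha>_nonzero[OF q]])
  then show ?thesis by (simp add: tanh_def field_simps)
qed

lemma pdx_h: "q \<in> U \<Longrightarrow> pdx h q = (h q + cosh (\<alpha> q) / sinh (\<alpha> q)) * pdx \<xi> q"
proof -
  assume q: "q \<in> U"
  let ?S = "sinh (\<alpha> q)" and ?C = "cosh (\<alpha> q)"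
  have "(\<epsilon>1 q * \<epsilon>2 q * exp (\<xi> q)) * ((pdx \<xi> q * ?C + ?S * pdx \<alpha> q) * (?C + h q * ?S))
      = (\<epsilon>1 q * \<epsilon>2 q * exp (\<xi> q)) * ((?C * pdx \<alpha> q + pdx h q * ?C + h q * ?S * pdx \<alpha> q) * ?S)"
    using codazzi_K[OF q] unfolding pdx_pdy_representation(2,4)[OF q] representation(1,3)[OF q]
    by (simp add: ac_simps)
  then have "(pdx \<xi> q * ?C + ?S * pdx \<alpha> q) * (?C + h q * ?S)
      = (?C * pdx \<alpha> q + pdx h q * ?C + h q * ?S * pdx \<alpha> q) * ?S"
    using signs_nonzero[OF q] by simp
  then have "?C * (pdx \<xi> q * (?C + h q * ?S)) = ?C * (pdx h q * ?S)"
    by (simp add: algebra_simps)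
  then have "pdx \<xi> q * (?C + h q * ?S) = pdx h q * ?S" by simp
  then show ?thesis using sinh_\<alpha>_nonzero[OF q] by (simp add: field_simps)
qed

lemma pdy_pdx_h:
  assumes q: "q \<in> U"
  shows "pdy (pdx h) q = (pdy h q - pdy \<alpha> q / (sinh (\<alpha> q))\<^sup>2) * pdx \<xi> q
    + (h q + cosh (\<alpha> q) / sinh (\<alpha> q)) * pdy (pdx \<xi>) q"
proof -
  let ?S = "sinh (\<alpha> q)" and ?C = "cosh (\<alpha> q)"
  have d: "\<alpha> differentiable (at q)" "h differentiable (at q)" "pdx \<xi> differentiable (at q)"
    using differentiable_parameters[OF q] by auto
  have "pdy (pdx h) q = (pdy h q + (?S * pdy \<alpha> q * ?S - ?C * (?C * pdy \<alpha> q)) / (?S * ?S)) * pdx \<xi> q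
      + (h q + ?C / ?S) * pdy (pdx \<xi>) q"
    by (rule pdy_real_eqI[OF open_U q pdx_h])
       (use sinh_\<alpha>_nonzero[OF q] in \<open>auto intro!: derivative_eq_intros has_field_derivative_pdy[OF d(1)]
         has_field_derivative_pdy[OF d(2)] has_field_derivative_pdy[OF d(3)]\<close>)
  moreover have "?S * pdy \<alpha> q * ?S - ?C * (?C * pdy \<alpha> q) = (?S * ?S - ?C * ?C) * pdy \<alpha> q"
    by (simp add: algebra_simps)
  moreover have "?C * ?C = ?S * ?S + 1" by (simp add: cosh_square_eq flip: power2_eq_square)
  ultimately show ?thesis by (simp add: power2_eq_square)
qed

lemma pdx_pdy_h:
  assumes q: "q \<in> U"
  shows "pdx (pdy h) q = (pdx h q + pdx \<alpha> q / (cosh (\<alpha> q))\<^sup>2) * pdy \<xi> q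
    + (h q + tanh (\<alpha> q)) * pdx (pdy \<xi>) q"
proof -
  have d: "\<alpha> differentiable (at q)" "h differentiable (at q)" "pdy \<xi> differentiable (at q)"
    using differentiable_parameters[OF q] by auto
  have "pdx (pdy h) q = (pdx h q + (1 - (tanh (\<alpha> q))\<^sup>2) * pdx \<alpha> q) * pdy \<xi> q
      + (h q + tanh (\<alpha> q)) * pdx (pdy \<xi>) q"
    by (rule pdx_real_eqI[OF open_U q pdy_h])
       (auto intro!: derivative_eq_intros has_field_derivative_pdx[OF d(1)]
         has_field_derivative_pdx[OF d(2)] has_field_derivative_pdx[OF d(3)])
  moreover have "1 - (tanh (\<alpha> q))\<^sup>2 = ((cosh (\<alpha> q))\<^sup>2 - (sinh (\<alpha> q))\<^sup>2) / (cosh (\<alpha> q))\<^sup>2"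
    by (simp add: tanh_def diff_divide_distrib power_divide)
  ultimately show ?thesis by (simp add: cosh_square_eq)
qed

lemma pdy_ln_abs_sinh_\<alpha>:
  assumes q: "q \<in> U"
  shows "pdy (\<lambda>q. ln \<bar>sinh (\<alpha> q)\<bar>) q = cosh (\<alpha> q) * pdy \<alpha> q / sinh (\<alpha> q)"
proof -
  have "pdy (\<lambda>q. sinh (\<alpha> q)) q = cosh (\<alpha> q) * pdy \<alpha> q"
    by (rule pdy_compose[OF differentiable_parameters(4)[OF q]]) (auto intro!: derivative_eq_intros)
  moreover have "(\<lambda>q. sinh (\<alpha> q)) differentiable (at q)"
    using smooth_generated_parameters(4)
    by (intro smooth_generated_differentiable[OF open_U smooth_generated.sinh q])
  ultimately show ?thesis
    using pdy_compose[of "\<lambda>q. sinh (\<alpha> q)" q "\<lambda>y. ln \<bar>y\<bar>",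
        OF _ has_real_derivative_ln_abs[OF sinh_\<alpha>_nonzero[OF q]]]
    by (simp add: field_simps)
qed

lemma pdx_ln_cosh_\<alpha>:
  assumes q: "q \<in> U"
  shows "pdx (\<lambda>q. ln (cosh (\<alpha> q))) q = sinh (\<alpha> q) * pdx \<alpha> q / cosh (\<alpha> q)"
proof -
  have "((\<lambda>y. ln (cosh y)) has_real_derivative sinh (\<alpha> q) / cosh (\<alpha> q)) (at (\<alpha> q))"
    by (auto intro!: derivative_eq_intros simp: field_simps)
  from pdx_compose[OF differentiable_parameters(4)[OF q] this] show ?thesis by simp
qed

lemma pdy_pdx_\<xi>:
  assumes q: "q \<in> U"
  shows "pdy (pdx \<xi>) q = pdx \<xi> q * pdy \<xi> q + pdy (\<lambda>q. ln \<bar>sinh (\<alpha> q)\<bar>) q * pdx \<xi> q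
    + pdx (\<lambda>q. ln (cosh (\<alpha> q))) q * pdy \<xi> q"
  unfolding pdy_ln_abs_sinh_\<alpha>[OF q] pdx_ln_cosh_\<alpha>[OF q]
proof (rule compatibility_solved_for_\<xi>xy[OF sinh_\<alpha>_nonzero[OF q] _ cosh_square_eq _ pdx_h[OF q]])
  show "pdy h q = (h q + sinh (\<alpha> q) / cosh (\<alpha> q)) * pdy \<xi> q"
    using pdy_h[OF q] by (simp add: tanh_def)
  \<comment> \<open>\<open>h\<^sub>x\<^sub>y = h\<^sub>y\<^sub>x\<close>: the compatibility condition of the two Codazzi equations\<close>
  show "(pdy h q - pdy \<alpha> q / (sinh (\<alpha> q))\<^sup>2) * pdx \<xi> q + (h q + cosh (\<alpha> q) / sinh (\<alpha> q)) * pdy (pdx \<xi>) q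
      = (pdx h q + pdx \<alpha> q / (cosh (\<alpha> q))\<^sup>2) * pdy \<xi> q + (h q + sinh (\<alpha> q) / cosh (\<alpha> q)) * pdy (pdx \<xi>) q"
    using pdy_pdx_h[OF q] pdx_pdy_h[OF q]
      smooth_on_pdy_pdx_eq_pdx_pdy[OF open_U q smooth_on_parameters(1)]
      smooth_on_pdy_pdx_eq_pdx_pdy[OF open_U q smooth_on_parameters(3)]
    by (simp add: tanh_def)
qed simp

lemma connection_coefficients:
  assumes p: "p \<in> U"
  shows "pdy A1 p / A2 p = \<epsilon>1 p * \<epsilon>2 p * (pdy \<alpha> p + pdy \<xi> p * tanh (\<alpha> p))"
    and "pdx A2 p / A1 p = \<epsilon>1 p * \<epsilon>2 p * (pdx \<alpha> p + pdx \<xi> p * (cosh (\<alpha> p) / sinh (\<alpha> p)))"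
proof -
  let ?G = "pdy \<alpha> p + pdy \<xi> p * tanh (\<alpha> p)"
  have "\<epsilon>1 p * \<epsilon>2 p * ?G * A2 p = \<epsilon>1 p * (\<epsilon>2 p * \<epsilon>2 p) * (?G * (sinh (\<alpha> p) + h p * cosh (\<alpha> p)))"
    by (simp add: representation(2)[OF p] algebra_simps)
  also have "\<dots> = pdy A1 p"
    unfolding sign_squares(2)[OF p] pdx_pdy_representation(1)[OF p] pdy_h[OF p] tanh_def
    by (simp add: field_simps)
  finally show "pdy A1 p / A2 p = \<epsilon>1 p * \<epsilon>2 p * ?G"
    using A_nonzero(2)[OF p] by (simp add: field_simps)
  let ?F = "pdx \<alpha> p + pdx \<xi> p * (cosh (\<alpha> p) / sinh (\<alpha> p))"
  have "\<epsilon>1 p * \<epsilon>2 p * ?F * A1 p = \<epsilon>2 p * (\<epsilon>1 p * \<epsilon>1 p) * (?F * (cosh (\<alpha> p) + h p * sinh (\<alpha> p)))"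
    by (simp add: representation(1)[OF p] algebra_simps)
  also have "\<dots> = pdx A2 p"
    unfolding sign_squares(1)[OF p] pdx_pdy_representation(2)[OF p] pdx_h[OF p]
    using sinh_\<alpha>_nonzero[OF p] by (simp add: field_simps)
  finally show "pdx A2 p / A1 p = \<epsilon>1 p * \<epsilon>2 p * ?F"
    using A_nonzero(1)[OF p] by (simp add: field_simps)
qed

lemma gauss_\<alpha>_\<xi>:
  assumes q: "q \<in> U"
  shows "pdx (\<lambda>q. pdx \<alpha> q + pdx \<xi> q * (cosh (\<alpha> q) / sinh (\<alpha> q))) q
    + pdy (\<lambda>q. pdy \<alpha> q + pdy \<xi> q * tanh (\<alpha> q)) q
    + exp (2 * \<xi> q) * sinh (\<alpha> q) * cosh (\<alpha> q) = 0"
proof -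
  define F where "F = (\<lambda>q. pdx \<alpha> q + pdx \<xi> q * (cosh (\<alpha> q) / sinh (\<alpha> q)))"
  define G where "G = (\<lambda>q. pdy \<alpha> q + pdy \<xi> q * tanh (\<alpha> q))"
  define \<epsilon> where "\<epsilon> = (\<lambda>q. \<epsilon>1 q * \<epsilon>2 q)"
  have "smooth_generated U F" "smooth_generated U G"
    unfolding F_def G_def tanh_def using sinh_\<alpha>_nonzero
    by (intro smooth_generated_parameters(4) smooth_generated.add smooth_generated.mult
        smooth_generated_divide
        smooth_generated.cosh smooth_generated.sinh smooth_generated.base smooth_on_pdx smooth_on_pdy
        smooth_on_parameters(1,2); simp)+
  then have FG: "F differentiable (at q)" "G differentiable (at q)"
    by (auto intro: smooth_generated_differentiable[OF open_U _ q])
  have \<epsilon>: "\<epsilon> differentiable (at q)" "pdx \<epsilon> q = 0" "pdy \<epsilon> q = 0"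
    using differentiable_parameters[OF q] pdx_pdy_signs[OF q] by (simp_all add: \<epsilon>_def pdx_mult pdy_mult)
  have "pdy (\<lambda>p. pdy A1 p / A2 p) q = pdy (\<lambda>p. \<epsilon> p * G p) q"
    using FG \<epsilon> connection_coefficients(1) by (intro pdy_cong[OF open_U q]) (auto simp: \<epsilon>_def G_def)
  then have P: "pdy (\<lambda>p. pdy A1 p / A2 p) q = \<epsilon> q * pdy G q"
    using FG \<epsilon> by (simp add: pdy_mult)
  have "pdx (\<lambda>p. pdx A2 p / A1 p) q = pdx (\<lambda>p. \<epsilon> p * F p) q"
    using FG \<epsilon> connection_coefficients(2) by (intro pdx_cong[OF open_U q]) (auto simp: \<epsilon>_def F_def)
  then have Q: "pdx (\<lambda>p. pdx A2 p / A1 p) q = \<epsilon> q * pdx F q"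
    using FG \<epsilon> by (simp add: pdx_mult)
  have "H q * K q = \<epsilon> q * (exp (2 * \<xi> q) * sinh (\<alpha> q) * cosh (\<alpha> q))"
    unfolding representation(3,4)[OF q] \<epsilon>_def by (simp add: exp_double power2_eq_square algebra_simps)
  with gauss[OF q] P Q have "\<epsilon> q * (pdx F q + pdy G q + exp (2 * \<xi> q) * sinh (\<alpha> q) * cosh (\<alpha> q)) = 0"
    by (simp add: algebra_simps)
  moreover have "\<epsilon> q \<noteq> 0" using signs_nonzero[OF q] by (simp add: \<epsilon>_def)
  ultimately show ?thesis by (simp add: F_def G_def)
qed

lemma fundamental_forms:
  assumes q: "q \<in> U"
  shows "(A1 q)\<^sup>2 = (cosh (\<alpha> q) + h q * sinh (\<alpha> q))\<^sup>2"
    and "(A2 q)\<^sup>2 = (sinh (\<alpha> q) + h q * cosh (\<alpha> q))\<^sup>2"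
    and "(H q)\<^sup>2 = exp (2 * \<xi> q) * (sinh (\<alpha> q))\<^sup>2"
    and "(K q)\<^sup>2 = exp (2 * \<xi> q) * (cosh (\<alpha> q))\<^sup>2"
  using sign_squares[OF q] unfolding representation[OF q]
  by (simp_all add: power_mult_distrib exp_double flip: power2_eq_square)

end

theorem mainTheorem1:
  fixes U :: "(real \<times> real) set"
    and r X Y :: "real \<times> real \<Rightarrow> real^3"
    and A1 A2 H K T1 T2 :: "real \<times> real \<Rightarrow> real"
    and qn :: real
  assumes U_open: "open U"
    and smooth_vec: "smooth_on U r" "smooth_on U X" "smooth_on U Y"
    and smooth_scal: "smooth_on U A1" "smooth_on U A2" "smooth_on U H" "smooth_on U K"
                     "smooth_on U T1" "smooth_on U T2"
    and frame: "\<forall>p\<in>U. norm (X p) = 1 \<and> norm (Y p) = 1 \<and> X p \<bullet> Y p = 0"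
    and regular: "\<forall>p\<in>U. A1 p \<noteq> 0 \<and> A2 p \<noteq> 0"
    and r_x: "\<forall>p\<in>U. pdx r p = A1 p *\<^sub>R X p"
    and r_y: "\<forall>p\<in>U. pdy r p = A2 p *\<^sub>R Y p"
    and N_x: "\<forall>p\<in>U. pdx (\<lambda>q. cross3 (X q) (Y q)) p = H p *\<^sub>R X p"
    and N_y: "\<forall>p\<in>U. pdy (\<lambda>q. cross3 (X q) (Y q)) p = K p *\<^sub>R Y p"
    and III_nondeg: "\<forall>p\<in>U. H p \<noteq> 0 \<and> K p \<noteq> 0"
    and no_umbilic: "\<forall>p\<in>U. - H p / A1 p \<noteq> - K p / A2 p"
    and qn_nz: "qn \<noteq> 0"
    and equil1: "\<forall>p\<in>U. pdx T1 p + (pdx A1 p / A1 p) * (T1 p - T2 p) = 0"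
    and equil2: "\<forall>p\<in>U. pdy T2 p + (pdy A2 p / A2 p) * (T2 p - T1 p) = 0"
    and equil3: "\<forall>p\<in>U. (- H p / A1 p) * T1 p + (- K p / A2 p) * T2 p + qn = 0"
    and first_kind1: "\<forall>p\<in>U. 2 * (T2 p * A1 p) * H p - qn * (A1 p)\<^sup>2 = - qn"
    and first_kind2: "\<forall>p\<in>U. 2 * (T1 p * A2 p) * K p - qn * (A2 p)\<^sup>2 = qn"
  shows "\<exists>h \<alpha> \<xi> :: real \<times> real \<Rightarrow> real.
           smooth_on U h \<and> smooth_on U \<alpha> \<and> smooth_on U \<xi> \<and>
           (\<forall>p\<in>U.
              (A1 p)\<^sup>2 = (cosh (\<alpha> p) + h p * sinh (\<alpha> p))\<^sup>2 \<and>
              (A2 p)\<^sup>2 = (sinh (\<alpha> p) + h p * cosh (\<alpha> p))\<^sup>2 \<and>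
              (H p)\<^sup>2 = exp (2 * \<xi> p) * (sinh (\<alpha> p))\<^sup>2 \<and>
              (K p)\<^sup>2 = exp (2 * \<xi> p) * (cosh (\<alpha> p))\<^sup>2 \<and>
              pdx h p = (h p + cosh (\<alpha> p) / sinh (\<alpha> p)) * pdx \<xi> p \<and>
              pdy h p = (h p + tanh (\<alpha> p)) * pdy \<xi> p \<and>
              pdy (pdx \<xi>) p = pdx \<xi> p * pdy \<xi> p
                 + pdy (\<lambda>q. ln \<bar>sinh (\<alpha> q)\<bar>) p * pdx \<xi> p
                 + pdx (\<lambda>q. ln (cosh (\<alpha> q))) p * pdy \<xi> p \<and>
              pdx (\<lambda>q. pdx \<alpha> q + pdx \<xi> q * (cosh (\<alpha> q) / sinh (\<alpha> q))) p
                 + pdy (\<lambda>q. pdy \<alpha> q + pdy \<xi> q * tanh (\<alpha> q)) p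
                 + exp (2 * \<xi> p) * sinh (\<alpha> p) * cosh (\<alpha> p) = 0 \<and>
              T1 p = qn * exp (- \<xi> p) / 2 *
                 ((2 * h p * sinh (\<alpha> p) + (1 + (h p)\<^sup>2) * cosh (\<alpha> p))
                  / (sinh (\<alpha> p) + h p * cosh (\<alpha> p))) \<and>
              T2 p = qn * exp (- \<xi> p) / 2 *
                 ((2 * h p * cosh (\<alpha> p) + (1 + (h p)\<^sup>2) * sinh (\<alpha> p))
                  / (cosh (\<alpha> p) + h p * sinh (\<alpha> p))))"
proof -
  interpret curvature_line_frame U r X Y A1 A2 H K
    using U_open smooth_vec smooth_scal frame regular r_x r_y N_x N_y by unfold_locales auto
  have "(H p * A2 p - K p * A1 p)\<^sup>2 = (K p)\<^sup>2 - (H p)\<^sup>2" if "p \<in> U" for p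
    by (rule first_kind_curvature_identity[of "A1 p" "A2 p" qn "H p" "T1 p" "K p" "T2 p"])
       (use regular qn_nz equil3 first_kind1 first_kind2 that in auto)
  moreover have "H p * A2 p - K p * A1 p \<noteq> 0" if "p \<in> U" for p
    using no_umbilic regular that by (auto simp: field_simps)
  ultimately interpret first_kind_frame U r X Y A1 A2 H K
    using III_nondeg by unfold_locales auto
  show ?thesis
  proof (intro exI conjI ballI)
    fix p assume p: "p \<in> U"
    show "T1 p = qn * exp (- \<xi> p) / 2 * ((2 * h p * sinh (\<alpha> p) + (1 + (h p)\<^sup>2) * cosh (\<alpha> p))
        / (sinh (\<alpha> p) + h p * cosh (\<alpha> p)))"
      using first_kind2 regular p
      by (intro stress_resultant_T1[OF sign_squares(2)[OF p] representation(2)[OF p] _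
            representation(4)[OF p]]) auto
    show "T2 p = qn * exp (- \<xi> p) / 2 * ((2 * h p * cosh (\<alpha> p) + (1 + (h p)\<^sup>2) * sinh (\<alpha> p))
        / (cosh (\<alpha> p) + h p * sinh (\<alpha> p)))"
      using first_kind1 regular III_nondeg p
      by (intro stress_resultant_T2[OF sign_squares(1)[OF p] representation(1)[OF p] _
            representation(3)[OF p]]) auto
  qed (use fundamental_forms pdx_h pdy_h pdy_pdx_\<xi> gauss_\<alpha>_\<xi> smooth_on_parameters in auto)
qed

end
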